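(* Let $X=\mathbb{R}^K$, $N\ge2$, $I=\{1,\dots,N\}$, and let $\Phi_i\in C^1(X;\mathbb{R})$ with locally Lipschitz gradients, $i\in I$. Let $(\theta(t),\boldsymbol{i}(t))_{t\ge0}$ and $(\xi(t),\boldsymbol{j}(t))_{t\ge0}$ be the stochastic gradient processes with constant and decreasing learning rate defined in the context. Then $(\theta(t),\boldsymbol{i}(t))_{t\ge0}$ and $(\xi(t),\boldsymbol{j}(t))_{t\ge0}$ are Markov processes.
   Context: $(\boldsymbol{i}(t))$: continuous-time Markov process on $I$, $\boldsymbol{i}(0)\sim\mathrm{Unif}(I)$, rate matrix with off-diagonal entries $\lambda>0$ and diagonal entries $-(N-1)\lambda$; $\theta$ solves $\dot\theta(t)=-\nabla\Phi_{\boldsymbol{i}(t)}(\theta(t))$, $\theta(0)=\theta_0$. $(\boldsymbol{j}(t))$: time-inhomogeneous continuous-time Markov process on $I$, $\boldsymbol{j}(0)\sim\mathrm{Unif}(I)$, rate matrix with off-diagonal entries $\mu(t)$ and diagonal entries $-(N-1)\mu(t)$, where $\mu:[0,\infty)\to(0,\infty)$ is non-decreasing, continuously differentiable, $\mu(t)\to\infty$, and locally $|\mu'|\le C_{\bar t}\mu$ on $[0,\bar t]$; $\xi$ solves $\dot\xi(t)=-\nabla\Phi_{\boldsymbol{j}(t)}(\xi(t))$, $\xi(0)=\xi_0$. *)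

theory Defs
  imports "HOL-Probability.Probability"
begin

definition loc_lipschitz :: "('a::metric_space \<Rightarrow> 'b::metric_space) \<Rightarrow> bool" where
  "loc_lipschitz g \<longleftrightarrow> (\<forall>x. \<exists>r>0. \<exists>L. L-lipschitz_on (ball x r) g)"

definition natural_filtration ::
  "'w measure \<Rightarrow> 'b measure \<Rightarrow> (real \<Rightarrow> 'w \<Rightarrow> 'b) \<Rightarrow> real \<Rightarrow> 'w measure" where
  "natural_filtration M S Z s =
     sigma (space M) (\<Union>u\<in>{0..s}. (\<lambda>A. Z u -` A \<inter> space M) ` sets S)"

definition markov_process ::
  "'w measure \<Rightarrow> 'b measure \<Rightarrow> (real \<Rightarrow> 'w \<Rightarrow> 'b) \<Rightarrow> bool" where
  "markov_process M S Z \<longleftrightarrow>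
     (\<forall>t\<ge>0. Z t \<in> measurable M S) \<and>
     (\<forall>s t f. 0 \<le> s \<longrightarrow> s \<le> t \<longrightarrow> f \<in> borel_measurable S \<longrightarrow> bounded (f ` space S) \<longrightarrow>
        (AE \<omega> in M. real_cond_exp M (natural_filtration M S Z s) (\<lambda>\<omega>. f (Z t \<omega>)) \<omega> =
                     real_cond_exp M (vimage_algebra (space M) (Z s) S) (\<lambda>\<omega>. f (Z t \<omega>)) \<omega>))"

definition kolmogorov_forward ::
  "nat \<Rightarrow> (real \<Rightarrow> nat \<Rightarrow> nat \<Rightarrow> real) \<Rightarrow> (real \<Rightarrow> real \<Rightarrow> nat \<Rightarrow> nat \<Rightarrow> real) \<Rightarrow> bool" where
  "kolmogorov_forward N q p \<longleftrightarrow>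
     (\<forall>s\<ge>0. \<forall>k<N. \<forall>l<N.
        p s s k l = (if k = l then 1 else 0) \<and>
        (\<forall>t\<ge>s. ((\<lambda>t. p s t k l) has_real_derivative (\<Sum>m<N. p s t k m * q t m l))
                   (at t within {s..})))"

text \<open>Cadlag path with values in a discrete set: locally constant to the right of every
  t \<ge> 0 and with a left limit (locally constant to the left) at every t > 0.\<close>
definition cadlag_discrete :: "(real \<Rightarrow> 'b) \<Rightarrow> bool" where
  "cadlag_discrete p \<longleftrightarrow>
     (\<forall>t\<ge>0. \<exists>e>0. \<forall>u\<in>{t..<t+e}. p u = p t) \<and>
     (\<forall>t>0. \<exists>e>0. \<exists>c. \<forall>u\<in>{t-e<..<t}. p u = c)"

definition ctmc :: "'w measure \<Rightarrow> nat \<Rightarrow> (real \<Rightarrow> nat \<Rightarrow> nat \<Rightarrow> real) \<Rightarrow> (real \<Rightarrow> 'w \<Rightarrow> nat) \<Rightarrow> bool" where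
  "ctmc M N q i \<longleftrightarrow>
     (\<forall>t\<ge>0. i t \<in> measurable M (count_space UNIV)) \<and>
     (\<forall>t\<ge>0. \<forall>\<omega>\<in>space M. i t \<omega> < N) \<and>
     (\<forall>\<omega>\<in>space M. cadlag_discrete (\<lambda>t. i t \<omega>)) \<and>
     (\<forall>k<N. prob_space.prob M {\<omega>\<in>space M. i 0 \<omega> = k} = 1 / real N) \<and>
     (\<exists>p. kolmogorov_forward N q p \<and>
        (\<forall>s t l. 0 \<le> s \<longrightarrow> s \<le> t \<longrightarrow> l < N \<longrightarrow>
           (AE \<omega> in M. real_cond_exp M (natural_filtration M (count_space UNIV) i s)
                          (\<lambda>\<omega>. indicator {l} (i t \<omega>)) \<omega> = p s t (i s \<omega>) l)))"

definition uniform_rates :: "nat \<Rightarrow> real \<Rightarrow> nat \<Rightarrow> nat \<Rightarrow> real" where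
  "uniform_rates N r k l = (if k = l then - (real N - 1) * r else r)"

end

theory Submission
  imports Defs
begin

(* Each path of the chain is right-continuous and piecewise constant, so on [s, t]
   the flow is the limit of Euler schemes that read the chain only at finitely many grid points
   of (s, t]; hence theta t (t >= s) is measurable w.r.t. sigma(theta s, i tau : tau >= s).
   Iterating the Markov property of the chain over finitely many future times shows that, given
   (theta s, i s), this sigma-algebra is conditionally independent of the past of the chain.
   Since theta s is itself determined by that past, E[f (theta t, i t) | past of (theta, i)]
   depends on (theta s, i s) only. *)

section \<open>Euler approximation of the switched flow\<close>

lemma loc_lipschitz_lipschitz_on_compact:
  fixes g :: "'a::metric_space \<Rightarrow> 'b::metric_space"
  assumes "loc_lipschitz g" "compact K"
  obtains L where "L-lipschitz_on K g"
proof -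
  have "local_lipschitz {0::real} K (\<lambda>_. g)"
  proof (rule local_lipschitzI)
    fix x assume "x \<in> K"
    obtain r L where r: "r > 0" "L-lipschitz_on (ball x r) g"
      using assms(1) unfolding loc_lipschitz_def by blast
    have "L-lipschitz_on (cball x (r/2) \<inter> K) g"
      by (rule lipschitz_on_subset[OF r(2)]) (use r in auto)
    then show "\<exists>u>0. \<exists>L. \<forall>t\<in>cball t u \<inter> {0}. L-lipschitz_on (cball x u \<inter> K) g" for t
      using r by (intro exI[of _ "r/2"]) auto
  qed
  then show ?thesis
    by (rule local_lipschitz_compact_implies_lipschitz[OF _ assms(2) compact_sing]) (use that in auto)
qed

lemma finite_family_lipschitz_on_compact:
  fixes F :: "'i \<Rightarrow> 'a::metric_space \<Rightarrow> 'b::metric_space"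
  assumes "finite I" "\<And>l. l \<in> I \<Longrightarrow> loc_lipschitz (F l)" "compact K"
  obtains L where "0 \<le> L" "\<And>l. l \<in> I \<Longrightarrow> L-lipschitz_on K (F l)"
proof -
  have "\<forall>l\<in>I. \<exists>L. L-lipschitz_on K (F l)"
    using loc_lipschitz_lipschitz_on_compact[OF assms(2) assms(3)] by blast
  then obtain L where L: "\<And>l. l \<in> I \<Longrightarrow> (L l)-lipschitz_on K (F l)"
    by (metis bchoice)
  have "(\<Sum>l\<in>I. \<bar>L l\<bar>)-lipschitz_on K (F l)" if "l \<in> I" for l
  proof (rule lipschitz_on_mono[OF L[OF that] order_refl])
    have "\<bar>L l\<bar> \<le> (\<Sum>l\<in>I. \<bar>L l\<bar>)"
      using assms(1) that by (intro member_le_sum) auto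
    then show "L l \<le> (\<Sum>l\<in>I. \<bar>L l\<bar>)" by linarith
  qed
  then show ?thesis
    using that[of "\<Sum>l\<in>I. \<bar>L l\<bar>"] by (simp add: sum_nonneg)
qed

definition grid_floor :: "real \<Rightarrow> real \<Rightarrow> real \<Rightarrow> real" where
  "grid_floor s h \<rho> = s + of_int \<lfloor>(\<rho> - s) / h\<rfloor> * h"

lemma grid_floor_le:
  assumes "0 < h" shows "grid_floor s h \<rho> \<le> \<rho>"
proof -
  have "of_int \<lfloor>(\<rho> - s) / h\<rfloor> * h \<le> \<rho> - s"
    using assms by (simp add: pos_le_divide_eq[symmetric])
  then show ?thesis unfolding grid_floor_def by simp
qed

lemma less_grid_floor_add:
  assumes "0 < h" shows "\<rho> < grid_floor s h \<rho> + h"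
proof -
  have "(\<rho> - s) / h < of_int \<lfloor>(\<rho> - s) / h\<rfloor> + 1"
    by linarith
  then have "\<rho> - s < (of_int \<lfloor>(\<rho> - s) / h\<rfloor> + 1) * h"
    by (simp only: pos_divide_less_eq[OF assms])
  then show ?thesis unfolding grid_floor_def by (simp add: algebra_simps)
qed

lemma grid_floor_ge:
  assumes "0 < h" "s \<le> \<rho>" shows "s \<le> grid_floor s h \<rho>"
  using assms unfolding grid_floor_def by simp

lemma grid_floor_eq:
  assumes "0 < h" "s + real k * h \<le> \<rho>" "\<rho> < s + real (Suc k) * h"
  shows "grid_floor s h \<rho> = s + real k * h"
proof -
  have "\<lfloor>(\<rho> - s) / h\<rfloor> = int k"
    using assms by (simp add: floor_eq_iff field_simps)
  then show ?thesis unfolding grid_floor_def by simp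
qed

lemma borel_measurable_comp_grid_floor:
  assumes "S \<in> sets lebesgue"
  shows "(\<lambda>\<rho>. \<phi> (grid_floor s h \<rho>)) \<in> borel_measurable (lebesgue_on S)"
proof -
  have "continuous_on S (\<lambda>\<rho>. (\<rho> - s) * inverse h)"
    by (intro continuous_intros)
  then have "(\<lambda>\<rho>. (\<rho> - s) / h) \<in> borel_measurable (lebesgue_on S)"
    using assms by (simp add: divide_inverse continuous_imp_measurable_on_sets_lebesgue)
  then have "(\<lambda>\<rho>. \<lfloor>(\<rho> - s) / h\<rfloor>) \<in> measurable (lebesgue_on S) (count_space UNIV)"
    using measurable_real_floor by (rule measurable_compose)
  from measurable_compose[OF this borel_measurable_count_space[of "\<lambda>m. \<phi> (s + of_int m * h)"]]
  show ?thesis unfolding grid_floor_def by (simp add: o_def)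
qed

lemma integral_grid_sum:
  fixes f :: "real \<Rightarrow> 'a::banach"
  assumes "f integrable_on {s..s + real n * h}" "0 \<le> h"
  shows "integral {s..s + real n * h} f = (\<Sum>k<n. integral {s + real k * h..s + real (Suc k) * h} f)"
  using assms(1)
proof (induction n)
  case (Suc n)
  have "f integrable_on {s..s + real n * h}"
    by (rule integrable_subinterval_real[OF Suc.prems]) (use assms(2) in \<open>auto simp: distrib_right\<close>)
  moreover have "integral {s..s + real n * h} f + integral {s + real n * h..s + real (Suc n) * h} f
      = integral {s..s + real (Suc n) * h} f"
    by (rule Henstock_Kurzweil_Integration.integral_combine)
      (use Suc.prems assms(2) in \<open>auto simp: distrib_right\<close>)
  ultimately show ?case
    using Suc.IH by simp
qed simp

definition euler_scheme :: "('i \<Rightarrow> 'a \<Rightarrow> 'a::real_vector) \<Rightarrow> real \<Rightarrow> 'a \<Rightarrow> 'i list \<Rightarrow> 'a" where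
  "euler_scheme F h x ls = foldl (\<lambda>x l. x - h *\<^sub>R F l x) x ls"

lemma euler_scheme_Nil [simp]: "euler_scheme F h x [] = x"
  by (simp add: euler_scheme_def)

lemma euler_scheme_snoc [simp]:
  "euler_scheme F h x (ls @ [l]) = euler_scheme F h x ls - h *\<^sub>R F l (euler_scheme F h x ls)"
  by (simp add: euler_scheme_def)

lemma continuous_on_euler_scheme:
  fixes F :: "'i \<Rightarrow> 'a::real_normed_vector \<Rightarrow> 'a"
  assumes "\<And>l. continuous_on UNIV (F l)"
  shows "continuous_on UNIV (\<lambda>x. euler_scheme F h x ls)"
proof (induction ls rule: rev_induct)
  case (snoc l ls)
  have "continuous_on UNIV (F l \<circ> (\<lambda>x. euler_scheme F h x ls))"
    by (rule continuous_on_compose[OF snoc]) (use assms continuous_on_subset in blast)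
  with snoc show ?case by (auto simp: o_def intro!: continuous_intros)
qed (simp add: continuous_on_id)

lemma discrete_gronwall:
  fixes e \<delta> :: "nat \<Rightarrow> real"
  assumes "1 \<le> P" "\<And>k. k < n \<Longrightarrow> 0 \<le> \<delta> k" "e 0 \<le> 0"
    and "P ^ n * (\<Sum>k<n. \<delta> k) \<le> B"
    and step: "\<And>k. k < n \<Longrightarrow> e k \<le> B \<Longrightarrow> e (Suc k) \<le> P * e k + \<delta> k"
  shows "e n \<le> P ^ n * (\<Sum>k<n. \<delta> k)"
proof -
  have "e k \<le> P ^ k * (\<Sum>j<k. \<delta> j)" if "k \<le> n" for k
    using that
  proof (induction k)
    case (Suc k)
    have "P ^ k * (\<Sum>j<k. \<delta> j) \<le> P ^ n * (\<Sum>j<n. \<delta> j)"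
      using Suc.prems assms(1,2)
      by (intro mult_mono power_increasing sum_mono2 sum_nonneg) auto
    then have "e (Suc k) \<le> P * e k + \<delta> k"
      using Suc assms(4) by (intro step) auto
    also have "\<dots> \<le> P * (P ^ k * (\<Sum>j<k. \<delta> j)) + P ^ Suc k * \<delta> k"
    proof (intro add_mono mult_left_mono)
      show "\<delta> k \<le> P ^ Suc k * \<delta> k"
        using mult_right_mono[OF one_le_power[OF assms(1), of "Suc k"] assms(2)[of k]] Suc.prems
        by simp
    qed (use Suc assms(1) in auto)
    finally show ?case by (simp add: algebra_simps)
  qed (use assms(3) in simp)
  then show ?thesis by simp
qed

text \<open>On each grid cell \<open>[a, a + h)\<close> of \<open>s + h\<int>\<close> the Euler scheme integrates exactly the
  integrand with the mode read at the right end \<open>a + h\<close> and the state at the left end \<open>a\<close>.\<close>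

definition frozen_integrand ::
  "('i \<Rightarrow> 'a \<Rightarrow> 'b) \<Rightarrow> (real \<Rightarrow> 'i) \<Rightarrow> (real \<Rightarrow> 'a) \<Rightarrow> real \<Rightarrow> real \<Rightarrow> real \<Rightarrow> 'b" where
  "frozen_integrand F c y s h \<rho> = F (c (grid_floor s h \<rho> + h)) (y (grid_floor s h \<rho>))"

lemma frozen_integrand_eq:
  assumes "0 < h" "s + real k * h \<le> \<rho>" "\<rho> < s + real (Suc k) * h"
  shows "frozen_integrand F c y s h \<rho> = F (c (s + real (Suc k) * h)) (y (s + real k * h))"
  using grid_floor_eq[OF assms] unfolding frozen_integrand_def by (simp add: algebra_simps)

lemma frozen_integrand_tendsto:
  fixes F :: "'i \<Rightarrow> 'a::topological_space \<Rightarrow> 'b::topological_space"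
  assumes cont: "continuous_on UNIV (F (c \<rho>))"
    and right: "\<exists>e>0. \<forall>u\<in>{\<rho>..<\<rho>+e}. c u = c \<rho>"
    and y: "continuous_on {s..t} y" and \<rho>: "\<rho> \<in> {s..t}"
    and h: "h \<longlonglongrightarrow> 0" "\<And>n. 0 < h n"
  shows "(\<lambda>n. frozen_integrand F c y s (h n) \<rho>) \<longlonglongrightarrow> F (c \<rho>) (y \<rho>)"
proof -
  define a where "a n = grid_floor s (h n) \<rho>" for n
  have a_le: "a n \<le> \<rho>" and less_a: "\<rho> < a n + h n" for n
    unfolding a_def using grid_floor_le[OF h(2)] less_grid_floor_add[OF h(2)] by blast+
  have a_in: "a n \<in> {s..t}" for n
    using grid_floor_ge[OF h(2)] a_le[of n] \<rho> unfolding a_def by auto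
  have "a \<longlonglongrightarrow> \<rho>"
  proof (rule tendsto_sandwich[of "\<lambda>n. \<rho> - h n" _ _ "\<lambda>n. \<rho>"])
    show "(\<lambda>n. \<rho> - h n) \<longlonglongrightarrow> \<rho>" using tendsto_diff[OF tendsto_const h(1), of \<rho>] by simp
    show "\<forall>\<^sub>F n in sequentially. \<rho> - h n \<le> a n"
      using less_a by (intro always_eventually allI) (simp add: algebra_simps less_imp_le)
    show "\<forall>\<^sub>F n in sequentially. a n \<le> \<rho>"
      using a_le by simp
  qed simp
  then have "(\<lambda>n. y (a n)) \<longlonglongrightarrow> y \<rho>"
    by (rule continuous_on_tendsto_compose[OF y _ \<rho>]) (use a_in in auto)
  then have lim: "(\<lambda>n. F (c \<rho>) (y (a n))) \<longlonglongrightarrow> F (c \<rho>) (y \<rho>)"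
    by (rule continuous_on_tendsto_compose[OF cont]) auto
  obtain e where e: "0 < e" "\<forall>u\<in>{\<rho>..<\<rho>+e}. c u = c \<rho>"
    using right by blast
  have ev: "\<forall>\<^sub>F n in sequentially. F (c \<rho>) (y (a n)) = frozen_integrand F c y s (h n) \<rho>"
  proof (rule eventually_mono[OF order_tendstoD(2)[OF h(1) e(1)]])
    fix n assume "h n < e"
    then have "a n + h n \<in> {\<rho>..<\<rho>+e}"
      using a_le[of n] less_a[of n] by simp
    then have "c (a n + h n) = c \<rho>"
      using e(2) by blast
    moreover have "frozen_integrand F c y s (h n) \<rho> = F (c (a n + h n)) (y (a n))"
      unfolding frozen_integrand_def a_def ..
    ultimately show "F (c \<rho>) (y (a n)) = frozen_integrand F c y s (h n) \<rho>"
      by simp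
  qed
  show ?thesis
    by (rule Lim_transform_eventually[OF lim ev])
qed

lemma frozen_integrand_error:
  fixes F :: "'i \<Rightarrow> 'a::euclidean_space \<Rightarrow> 'b::euclidean_space"
  assumes I: "finite I" and cont: "\<And>l. l \<in> I \<Longrightarrow> continuous_on UNIV (F l)"
    and c_in: "\<And>r. s \<le> r \<Longrightarrow> c r \<in> I"
    and right: "\<And>r. s \<le> r \<Longrightarrow> \<exists>e>0. \<forall>u\<in>{r..<r+e}. c u = c r"
    and y_cont: "continuous_on {s..t} y"
    and g: "(\<lambda>\<rho>. F (c \<rho>) (y \<rho>)) integrable_on {s..t}"
    and h: "h \<longlonglongrightarrow> 0" "\<And>n. 0 < h n"
  shows "\<And>n. (\<lambda>\<rho>. norm (F (c \<rho>) (y \<rho>) - frozen_integrand F c y s (h n) \<rho>)) integrable_on {s..t}"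
    and "(\<lambda>n. integral {s..t} (\<lambda>\<rho>. norm (F (c \<rho>) (y \<rho>) - frozen_integrand F c y s (h n) \<rho>)))
           \<longlonglongrightarrow> 0"
proof -
  define f where "f n \<rho> = norm (F (c \<rho>) (y \<rho>) - frozen_integrand F c y s (h n) \<rho>)" for n \<rho>
  obtain B where B: "\<And>l \<rho>. l \<in> I \<Longrightarrow> \<rho> \<in> {s..t} \<Longrightarrow> norm (F l (y \<rho>)) \<le> B"
  proof -
    have "compact (y ` {s..t})"
      by (rule compact_continuous_image[OF y_cont compact_Icc])
    then have "compact (\<Union>l\<in>I. F l ` y ` {s..t})"
      using I by (auto intro!: compact_UN compact_continuous_image continuous_on_subset[OF cont])
    then obtain B where "\<forall>z\<in>(\<Union>l\<in>I. F l ` y ` {s..t}). norm z \<le> B"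
      by (meson bounded_iff compact_imp_bounded)
    then show ?thesis using that by blast
  qed
  have frozen_B: "norm (frozen_integrand F c y s (h n) \<rho>) \<le> B" if "\<rho> \<in> {s..t}" for n \<rho>
  proof -
    have "s \<le> grid_floor s (h n) \<rho>" "grid_floor s (h n) \<rho> \<le> \<rho>"
      using grid_floor_ge[OF h(2)] grid_floor_le[OF h(2)] that by auto
    then show ?thesis
      unfolding frozen_integrand_def using that h(2)[of n] by (intro B c_in) auto
  qed
  have f_B: "norm (f n \<rho>) \<le> 2 * B" if "\<rho> \<in> {s..t}" for n \<rho>
    using norm_triangle_ineq4[of "F (c \<rho>) (y \<rho>)" "frozen_integrand F c y s (h n) \<rho>"]
      B[OF c_in, of \<rho> \<rho>] frozen_B[OF that, of n] that
    unfolding f_def by fastforce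
  have f_meas: "f n \<in> borel_measurable (lebesgue_on {s..t})" for n
  proof -
    have "(\<lambda>\<rho>. F (c \<rho>) (y \<rho>)) \<in> borel_measurable (lebesgue_on {s..t})"
      using g by (rule integrable_imp_measurable)
    moreover have "frozen_integrand F c y s (h n) \<in> borel_measurable (lebesgue_on {s..t})"
      unfolding frozen_integrand_def by (rule borel_measurable_comp_grid_floor) simp
    ultimately have "(\<lambda>\<rho>. F (c \<rho>) (y \<rho>) - frozen_integrand F c y s (h n) \<rho>)
        \<in> borel_measurable (lebesgue_on {s..t})"
      by (rule borel_measurable_diff)
    then show ?thesis
      unfolding f_def by measurable
  qed
  show f_int: "f n integrable_on {s..t}" for n
    by (rule measurable_bounded_by_integrable_imp_integrable[OF f_meas, of "\<lambda>_. 2 * B"])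
      (use f_B in \<open>auto intro: integrable_on_const\<close>)
  have conv: "(\<lambda>n. f n \<rho>) \<longlonglongrightarrow> 0" if "\<rho> \<in> {s..t}" for \<rho>
  proof -
    have "s \<le> \<rho>" using that by simp
    then have "(\<lambda>n. frozen_integrand F c y s (h n) \<rho>) \<longlonglongrightarrow> F (c \<rho>) (y \<rho>)"
      by (intro frozen_integrand_tendsto[where F=F and c=c, OF cont[OF c_in] right y_cont that h])
    from tendsto_norm[OF tendsto_diff[OF tendsto_const[of "F (c \<rho>) (y \<rho>)"] this]]
    show ?thesis
      unfolding f_def by simp
  qed
  have "(\<lambda>n. integral {s..t} (f n)) \<longlonglongrightarrow> integral {s..t} (\<lambda>_. 0::real)"
    by (rule dominated_convergence(2)[OF f_int integrable_on_const f_B conv]) auto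
  then show "(\<lambda>n. integral {s..t} (f n)) \<longlonglongrightarrow> 0" by simp
qed

lemma integral_equation_step:
  fixes g :: "real \<Rightarrow> 'a::banach"
  assumes ode: "\<And>r. r \<in> {s..t} \<Longrightarrow> (g has_integral (y s - y r)) {s..r}"
    and "s \<le> a" "a \<le> b" "b \<le> t"
  shows "y b = y a - integral {a..b} g"
proof -
  have "integral {s..a} g + integral {a..b} g = integral {s..b} g"
    using ode[of b] assms(2-4) by (intro Henstock_Kurzweil_Integration.integral_combine) auto
  moreover have "integral {s..r} g = y s - y r" if "r \<in> {s..t}" for r
    using ode[OF that] by (rule integral_unique)
  ultimately show ?thesis
    using assms(2-4) by (simp add: algebra_simps)
qed

lemma integral_equation_continuous:
  fixes g :: "real \<Rightarrow> 'a::banach"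
  assumes ode: "\<And>r. r \<in> {s..t} \<Longrightarrow> (g has_integral (y s - y r)) {s..r}"
  shows "continuous_on {s..t} y"
proof (cases "s \<le> t")
  case True
  have "continuous_on {s..t} (\<lambda>r. y s - integral {s..r} g)"
    using ode[of t] True by (intro continuous_intros indefinite_integral_continuous_1) auto
  moreover have "y s - integral {s..r} g = y r" if "r \<in> {s..t}" for r
    using integral_unique[OF ode[OF that]] by simp
  ultimately show ?thesis
    by (rule continuous_on_eq)
qed simp

lemma norm_integral_sub_step_le:
  fixes g f :: "real \<Rightarrow> 'a::euclidean_space"
  assumes g: "g integrable_on {a..b}" and gf: "(\<lambda>\<rho>. norm (g \<rho> - f \<rho>)) integrable_on {a..b}"
    and "a \<le> b" and f: "\<And>\<rho>. \<rho> \<in> {a..<b} \<Longrightarrow> f \<rho> = C"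
  shows "norm (integral {a..b} g - (b - a) *\<^sub>R C) \<le> integral {a..b} (\<lambda>\<rho>. norm (g \<rho> - f \<rho>))"
proof -
  have spike: "norm (g \<rho> - f \<rho>) = norm (g \<rho> - C)" if "\<rho> \<in> {a..b} - {b}" for \<rho>
    using f that by auto
  have gC: "(\<lambda>\<rho>. norm (g \<rho> - C)) integrable_on {a..b}"
    by (rule integrable_spike_finite[of "{b}", OF _ spike[symmetric] gf]) auto
  have "integral {a..b} g - (b - a) *\<^sub>R C = integral {a..b} (\<lambda>\<rho>. g \<rho> - C)"
    using Henstock_Kurzweil_Integration.integral_diff[OF g integrable_const_ivl, of C] assms(3)
    by simp
  also have "norm \<dots> \<le> integral {a..b} (\<lambda>\<rho>. norm (g \<rho> - C))"
    using g gC by (intro integral_norm_bound_integral integrable_diff) auto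
  also have "\<dots> = integral {a..b} (\<lambda>\<rho>. norm (g \<rho> - f \<rho>))"
    using spike by (intro integral_spike[of "{b}"]) auto
  finally show ?thesis .
qed

lemma lipschitz_euler_step_error:
  fixes f :: "'a::real_normed_vector \<Rightarrow> 'a"
  assumes "L-lipschitz_on K f" "x \<in> K" "z \<in> K" "0 \<le> h"
  shows "norm ((x - h *\<^sub>R f x) - (z - v)) \<le> (1 + h * L) * norm (x - z) + norm (v - h *\<^sub>R f z)"
proof -
  have "norm ((x - h *\<^sub>R f x) - (z - v)) = norm ((x - z) - h *\<^sub>R (f x - f z) + (v - h *\<^sub>R f z))"
    by (rule arg_cong[where f=norm]) (simp add: algebra_simps)
  also have "\<dots> \<le> norm ((x - z) - h *\<^sub>R (f x - f z)) + norm (v - h *\<^sub>R f z)"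
    by (rule norm_triangle_ineq)
  also have "\<dots> \<le> norm (x - z) + h * norm (f x - f z) + norm (v - h *\<^sub>R f z)"
    using norm_triangle_ineq4[of "x - z" "h *\<^sub>R (f x - f z)"] assms(4) by simp
  also have "h * norm (f x - f z) \<le> h * (L * norm (x - z))"
    using lipschitz_onD[OF assms(1-3)] assms(4) by (simp add: dist_norm mult_left_mono)
  finally show ?thesis
    by (simp add: algebra_simps)
qed

lemma euler_step_error:
  fixes F :: "'a::euclidean_space \<Rightarrow> 'a" and g f :: "real \<Rightarrow> 'a"
  assumes "L-lipschitz_on K F" "x \<in> K" "z \<in> K" "a \<le> b"
    and "g integrable_on {a..b}" "(\<lambda>\<rho>. norm (g \<rho> - f \<rho>)) integrable_on {a..b}"
    and "\<And>\<rho>. \<rho> \<in> {a..<b} \<Longrightarrow> f \<rho> = F z"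
  shows "norm ((x - (b - a) *\<^sub>R F x) - (z - integral {a..b} g))
    \<le> (1 + (b - a) * L) * norm (x - z) + integral {a..b} (\<lambda>\<rho>. norm (g \<rho> - f \<rho>))"
proof -
  have "0 \<le> b - a" using assms(4) by simp
  from lipschitz_euler_step_error[OF assms(1-3) this, of "integral {a..b} g"]
    norm_integral_sub_step_le[OF assms(5,6,4,7)]
  show ?thesis by linarith
qed

lemma euler_scheme_grid_step:
  fixes F :: "'i \<Rightarrow> 'a::euclidean_space \<Rightarrow> 'a" and c :: "real \<Rightarrow> 'i" and y :: "real \<Rightarrow> 'a"
    and s t h :: real
  defines "x \<equiv> \<lambda>k. euler_scheme F h (y s) (map (\<lambda>j. c (s + real (Suc j) * h)) [0..<k])"
    and "r \<equiv> \<lambda>k. s + real k * h"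
  assumes L: "\<And>l. l \<in> I \<Longrightarrow> L-lipschitz_on K (F l)"
    and near_K: "\<And>\<rho> z. \<rho> \<in> {s..t} \<Longrightarrow> norm (z - y \<rho>) \<le> 1 \<Longrightarrow> z \<in> K"
    and c_in: "\<And>\<rho>. s \<le> \<rho> \<Longrightarrow> c \<rho> \<in> I"
    and ode: "\<And>\<rho>. \<rho> \<in> {s..t} \<Longrightarrow> ((\<lambda>\<sigma>. F (c \<sigma>) (y \<sigma>)) has_integral (y s - y \<rho>)) {s..\<rho>}"
    and "0 < h" "r (Suc k) \<le> t"
    and int: "(\<lambda>\<rho>. norm (F (c \<rho>) (y \<rho>) - frozen_integrand F c y s h \<rho>)) integrable_on {s..t}"
    and close: "norm (x k - y (r k)) \<le> 1"
  shows "norm (x (Suc k) - y (r (Suc k))) \<le> (1 + h * L) * norm (x k - y (r k))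
    + integral {r k..r (Suc k)} (\<lambda>\<rho>. norm (F (c \<rho>) (y \<rho>) - frozen_integrand F c y s h \<rho>))"
proof -
  let ?l = "c (r (Suc k))" and ?g = "\<lambda>\<rho>. F (c \<rho>) (y \<rho>)"
  have h_eq: "r (Suc k) - r k = h" and "r k \<le> r (Suc k)"
    using \<open>0 < h\<close> unfolding r_def by (simp_all add: algebra_simps)
  moreover have "s \<le> r k"
    using \<open>0 < h\<close> unfolding r_def by simp
  ultimately have r_in: "r k \<in> {s..t}" "r (Suc k) \<in> {s..t}"
    using \<open>r (Suc k) \<le> t\<close> by auto
  have "?l \<in> I"
    using c_in r_in(2) by simp
  have x_K: "x k \<in> K" and y_K: "y (r k) \<in> K"
    using near_K[OF r_in(1)] close by auto
  have g_int: "?g integrable_on {r k..r (Suc k)}"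
    by (rule integrable_subinterval_real[OF has_integral_integrable[OF ode[of t]]])
      (use r_in in auto)
  have int_k: "(\<lambda>\<rho>. norm (?g \<rho> - frozen_integrand F c y s h \<rho>)) integrable_on {r k..r (Suc k)}"
    by (rule integrable_subinterval_real[OF int]) (use r_in in auto)
  have frozen: "frozen_integrand F c y s h \<rho> = F ?l (y (r k))" if "\<rho> \<in> {r k..<r (Suc k)}" for \<rho>
    using frozen_integrand_eq[OF \<open>0 < h\<close>, where k=k and \<rho>=\<rho> and s=s] that unfolding r_def by simp
  from euler_step_error[OF L[OF \<open>?l \<in> I\<close>] x_K y_K \<open>r k \<le> r (Suc k)\<close> g_int int_k frozen]
  have "norm ((x k - h *\<^sub>R F ?l (x k)) - (y (r k) - integral {r k..r (Suc k)} ?g))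
      \<le> (1 + h * L) * norm (x k - y (r k))
        + integral {r k..r (Suc k)} (\<lambda>\<rho>. norm (?g \<rho> - frozen_integrand F c y s h \<rho>))"
    unfolding h_eq .
  moreover have "y (r (Suc k)) = y (r k) - integral {r k..r (Suc k)} ?g"
    using r_in \<open>r k \<le> r (Suc k)\<close> by (intro integral_equation_step[OF ode]) auto
  moreover have "x (Suc k) = x k - h *\<^sub>R F ?l (x k)"
    unfolding x_def r_def by simp
  ultimately show ?thesis
    by simp
qed

lemma euler_scheme_error_le:
  fixes F :: "'i \<Rightarrow> 'a::euclidean_space \<Rightarrow> 'a" and c :: "real \<Rightarrow> 'i" and y :: "real \<Rightarrow> 'a"
    and s t h :: real
  defines "D \<equiv> integral {s..t} (\<lambda>\<rho>. norm (F (c \<rho>) (y \<rho>) - frozen_integrand F c y s h \<rho>))"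
  assumes L: "\<And>l. l \<in> I \<Longrightarrow> L-lipschitz_on K (F l)" "0 \<le> L"
    and near_K: "\<And>r x. r \<in> {s..t} \<Longrightarrow> norm (x - y r) \<le> 1 \<Longrightarrow> x \<in> K"
    and c_in: "\<And>r. s \<le> r \<Longrightarrow> c r \<in> I"
    and ode: "\<And>r. r \<in> {s..t} \<Longrightarrow> ((\<lambda>\<rho>. F (c \<rho>) (y \<rho>)) has_integral (y s - y r)) {s..r}"
    and h: "h = (t - s) / Suc n" and "s < t"
    and D_int: "(\<lambda>\<rho>. norm (F (c \<rho>) (y \<rho>) - frozen_integrand F c y s h \<rho>)) integrable_on {s..t}"
    and small: "exp (L * (t - s)) * D \<le> 1"
  shows "norm (euler_scheme F h (y s) (map (\<lambda>k. c (s + real (Suc k) * h)) [0..<Suc n]) - y t)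
    \<le> exp (L * (t - s)) * D"
proof -
  define g where "g \<rho> = F (c \<rho>) (y \<rho>)" for \<rho>
  define r where "r k = s + real k * h" for k
  define x where "x k = euler_scheme F h (y s) (map (\<lambda>k. c (r (Suc k))) [0..<k])" for k
  define \<delta> where "\<delta> k = integral {r k..r (Suc k)} (\<lambda>\<rho>. norm (g \<rho> - frozen_integrand F c y s h \<rho>))" for k
  define P where "P = 1 + h * L"
  have h_pos: "0 < h" using h \<open>s < t\<close> by simp
  have r_end: "r (Suc n) = t" using h unfolding r_def by simp
  have r_in: "r k \<in> {s..t}" if "k \<le> Suc n" for k
    using that h_pos mult_right_mono[of "real k" "real (Suc n)" h] r_end unfolding r_def by auto
  have \<delta>_int: "(\<lambda>\<rho>. norm (g \<rho> - frozen_integrand F c y s h \<rho>)) integrable_on {r k..r (Suc k)}"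
    if "k < Suc n" for k
    unfolding g_def
    by (rule integrable_subinterval_real[OF D_int]) (use that r_in[of k] r_in[of "Suc k"] in auto)
  have \<delta>_nonneg: "0 \<le> \<delta> k" if "k < Suc n" for k
    unfolding \<delta>_def using \<delta>_int[OF that] by (rule integral_nonneg) simp
  have D_sum: "D = (\<Sum>k<Suc n. \<delta> k)"
    using integral_grid_sum[of _ s "Suc n" h] D_int r_end h_pos
    unfolding D_def \<delta>_def r_def g_def by simp
  have D_nonneg: "0 \<le> D"
    using \<delta>_nonneg unfolding D_sum by (intro sum_nonneg) auto
  have P_pow: "P ^ Suc n \<le> exp (L * (t - s))"
  proof -
    have "0 \<le> L * (t - s)" using \<open>0 \<le> L\<close> \<open>s < t\<close> by simp
    then show ?thesis
      using exp_ge_one_plus_x_over_n_power_n[of "Suc n" "L * (t - s)"]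
      unfolding P_def h by (simp add: mult.commute)
  qed
  have step: "norm (x (Suc k) - y (r (Suc k))) \<le> P * norm (x k - y (r k)) + \<delta> k"
    if "k < Suc n" "norm (x k - y (r k)) \<le> 1" for k
    using euler_scheme_grid_step[OF L(1) near_K c_in ode h_pos _ D_int, where k=k] r_in[of "Suc k"] that
    unfolding x_def r_def \<delta>_def g_def P_def by simp
  have "norm (x (Suc n) - y (r (Suc n))) \<le> P ^ Suc n * (\<Sum>k<Suc n. \<delta> k)"
  proof (rule discrete_gronwall[where e="\<lambda>k. norm (x k - y (r k))" and B=1])
    show "1 \<le> P"
      using h_pos \<open>0 \<le> L\<close> unfolding P_def by simp
    show "norm (x 0 - y (r 0)) \<le> 0"
      unfolding x_def r_def by simp
    show "P ^ Suc n * (\<Sum>k<Suc n. \<delta> k) \<le> 1"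
      using order_trans[OF mult_right_mono[OF P_pow D_nonneg] small] D_sum by simp
  qed (use step \<delta>_nonneg in auto)
  also have "\<dots> \<le> exp (L * (t - s)) * D"
    using mult_right_mono[OF P_pow D_nonneg] D_sum by simp
  finally show ?thesis
    using r_end unfolding x_def r_def by simp
qed

lemma euler_scheme_tendsto:
  fixes F :: "'i \<Rightarrow> 'a::euclidean_space \<Rightarrow> 'a"
  assumes I: "finite I" and cont: "\<And>l. l \<in> I \<Longrightarrow> continuous_on UNIV (F l)"
    and lip: "\<And>l. l \<in> I \<Longrightarrow> loc_lipschitz (F l)"
    and c_in: "\<And>r. s \<le> r \<Longrightarrow> c r \<in> I"
    and right: "\<And>r. s \<le> r \<Longrightarrow> \<exists>e>0. \<forall>u\<in>{r..<r+e}. c u = c r"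
    and ode: "\<And>r. r \<in> {s..t} \<Longrightarrow> ((\<lambda>\<rho>. F (c \<rho>) (y \<rho>)) has_integral (y s - y r)) {s..r}"
    and "s < t"
  shows "(\<lambda>n. euler_scheme F ((t - s) / Suc n) (y s)
            (map (\<lambda>k. c (s + real (Suc k) * ((t - s) / Suc n))) [0..<Suc n])) \<longlonglongrightarrow> y t"
proof -
  define h where "h n = (t - s) / Suc n" for n
  define D where "D n = integral {s..t} (\<lambda>\<rho>. norm (F (c \<rho>) (y \<rho>) - frozen_integrand F c y s (h n) \<rho>))"
    for n
  have y_cont: "continuous_on {s..t} y"
    using ode by (rule integral_equation_continuous)
  define K where "K = {a + b |a b. a \<in> y ` {s..t} \<and> b \<in> cball (0::'a) 1}"
  have "compact K"
    unfolding K_def by (intro compact_sums compact_continuous_image y_cont compact_Icc compact_cball)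
  then obtain L where L: "0 \<le> L" "\<And>l. l \<in> I \<Longrightarrow> L-lipschitz_on K (F l)"
    using finite_family_lipschitz_on_compact[where F=F, OF I lip] by blast
  have near_K: "x \<in> K" if "r \<in> {s..t}" "norm (x - y r) \<le> 1" for r x
  proof -
    have "x = y r + (x - y r)" by simp
    then show ?thesis
      unfolding K_def using that by (force simp: dist_norm)
  qed
  have h: "h \<longlonglongrightarrow> 0" "\<And>n. 0 < h n"
    unfolding h_def using \<open>s < t\<close> LIMSEQ_Suc[OF lim_const_over_n[of "t - s"]] by auto
  have g_int: "(\<lambda>\<rho>. F (c \<rho>) (y \<rho>)) integrable_on {s..t}"
    using ode[of t] \<open>s < t\<close> by auto
  note D = frozen_integrand_error[OF I cont c_in right y_cont g_int h]
  have ED: "(\<lambda>n. exp (L * (t - s)) * D n) \<longlonglongrightarrow> 0"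
    unfolding D_def using tendsto_mult_right_zero[OF D(2)] .
  have "\<forall>\<^sub>F n in sequentially. exp (L * (t - s)) * D n \<le> 1"
    using order_tendstoD(2)[OF ED zero_less_one] by (rule eventually_mono) simp
  then have "\<forall>\<^sub>F n in sequentially.
      norm (euler_scheme F (h n) (y s) (map (\<lambda>k. c (s + real (Suc k) * h n)) [0..<Suc n]) - y t)
        \<le> exp (L * (t - s)) * D n"
    unfolding D_def
    by (rule eventually_mono) (rule euler_scheme_error_le[OF L(2) L(1) near_K c_in ode h_def \<open>s < t\<close> D(1)])
  from Lim_null_comparison[OF this ED]
  have "(\<lambda>n. euler_scheme F (h n) (y s)
      (map (\<lambda>k. c (s + real (Suc k) * h n)) [0..<Suc n]) - y t) \<longlonglongrightarrow> 0" .
  then show ?thesis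
    unfolding h_def by (rule LIM_zero_cancel)
qed

lemma measurable_map_list:
  fixes X :: "'t \<Rightarrow> 'w \<Rightarrow> 'b::countable"
  assumes "\<And>\<tau>. \<tau> \<in> set ts \<Longrightarrow> X \<tau> \<in> measurable M (count_space UNIV)"
  shows "(\<lambda>\<omega>. map (\<lambda>\<tau>. X \<tau> \<omega>) ts) \<in> measurable M (count_space UNIV)"
  using assms
proof (induction ts)
  case (Cons \<tau> ts)
  then have rest: "(\<lambda>\<omega>. map (\<lambda>\<tau>. X \<tau> \<omega>) ts) \<in> measurable M (count_space UNIV)"
    by simp
  have "(\<lambda>\<omega>. (\<lambda>m \<omega>. m # map (\<lambda>\<tau>. X \<tau> \<omega>) ts) (X \<tau> \<omega>) \<omega>) \<in> measurable M (count_space UNIV)"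
    by (rule measurable_compose_countable'[where I=UNIV])
      (use Cons.prems measurable_compose[OF rest measurable_count_space] in auto)
  then show ?case by simp
qed simp

lemma switched_flow_measurable:
  fixes G :: "'i::countable \<Rightarrow> 'a::euclidean_space \<Rightarrow> 'a" and \<theta> :: "real \<Rightarrow> 'w \<Rightarrow> 'a"
  assumes I: "finite I" and cont: "\<And>l. l \<in> I \<Longrightarrow> continuous_on UNIV (G l)"
    and lip: "\<And>l. l \<in> I \<Longrightarrow> loc_lipschitz (G l)"
    and i_in: "\<And>\<omega> r. \<omega> \<in> space M \<Longrightarrow> s \<le> r \<Longrightarrow> i r \<omega> \<in> I"
    and right: "\<And>\<omega> r. \<omega> \<in> space M \<Longrightarrow> s \<le> r \<Longrightarrow> \<exists>e>0. \<forall>u\<in>{r..<r+e}. i u \<omega> = i r \<omega>"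
    and ode: "\<And>\<omega> r. \<omega> \<in> space M \<Longrightarrow> r \<in> {s..t} \<Longrightarrow>
      ((\<lambda>\<rho>. G (i \<rho> \<omega>) (\<theta> \<rho> \<omega>)) has_integral (\<theta> s \<omega> - \<theta> r \<omega>)) {s..r}"
    and i_meas: "\<And>\<tau>. \<tau> \<in> {s<..t} \<Longrightarrow> i \<tau> \<in> measurable M (count_space UNIV)"
    and \<theta>_meas: "\<theta> s \<in> borel_measurable M" and "s \<le> t"
  shows "\<theta> t \<in> borel_measurable M"
proof (cases "s = t")
  case False
  then have "s < t" using \<open>s \<le> t\<close> by simp
  define F where "F l = (if l \<in> I then G l else (\<lambda>_. 0))" for l
  define ts where "ts n = map (\<lambda>k. s + real (Suc k) * ((t - s) / Suc n)) [0..<Suc n]" for n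
  have ts_in: "\<tau> \<in> {s<..t}" if "\<tau> \<in> set (ts n)" for \<tau> n
  proof -
    have "\<tau> \<in> (\<lambda>k. s + real (Suc k) * ((t - s) / Suc n)) ` {0..<Suc n}"
      using that unfolding ts_def by (simp only: set_map set_upt)
    then obtain k where "k < Suc n" "\<tau> = s + real (Suc k) * ((t - s) / Suc n)"
      by auto
    moreover from this have "real (Suc k) * ((t - s) / Suc n) \<le> real (Suc n) * ((t - s) / Suc n)"
      using \<open>s < t\<close> by (intro mult_right_mono) auto
    ultimately show ?thesis using \<open>s < t\<close> by auto
  qed
  have "(\<lambda>\<omega>. euler_scheme F ((t - s) / Suc n) (\<theta> s \<omega>) (map (\<lambda>\<tau>. i \<tau> \<omega>) (ts n)))
      \<in> borel_measurable M" for n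
  proof (rule measurable_compose_countable'[where I=UNIV, OF _ measurable_map_list])
    have "continuous_on UNIV (F l)" for l
      unfolding F_def using cont by auto
    then have euler_meas: "(\<lambda>x. euler_scheme F ((t - s) / Suc n) x vs) \<in> borel_measurable borel"
      for vs by (intro borel_measurable_continuous_onI continuous_on_euler_scheme)
    show "(\<lambda>\<omega>. euler_scheme F ((t - s) / Suc n) (\<theta> s \<omega>) vs) \<in> borel_measurable M" for vs
      by (rule measurable_compose[OF \<theta>_meas euler_meas])
  qed (use i_meas ts_in in auto)
  moreover have "(\<lambda>n. euler_scheme F ((t - s) / Suc n) (\<theta> s \<omega>) (map (\<lambda>\<tau>. i \<tau> \<omega>) (ts n)))
      \<longlonglongrightarrow> \<theta> t \<omega>" if \<omega>: "\<omega> \<in> space M" for \<omega>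
  proof -
    have ode_F: "((\<lambda>\<rho>. F (i \<rho> \<omega>) (\<theta> \<rho> \<omega>)) has_integral (\<theta> s \<omega> - \<theta> r \<omega>)) {s..r}"
      if "r \<in> {s..t}" for r
      by (rule has_integral_eq[OF _ ode[OF \<omega> that]]) (use i_in[OF \<omega>] in \<open>auto simp: F_def\<close>)
    have "(\<lambda>n. euler_scheme F ((t - s) / Suc n) (\<theta> s \<omega>)
        (map (\<lambda>k. i (s + real (Suc k) * ((t - s) / Suc n)) \<omega>) [0..<Suc n])) \<longlonglongrightarrow> \<theta> t \<omega>"
      by (rule euler_scheme_tendsto[OF I, where c="\<lambda>r. i r \<omega>" and y="\<lambda>r. \<theta> r \<omega>", OF _ _ _ _ ode_F])
        (use \<open>s < t\<close> cont lip i_in[OF \<omega>] right[OF \<omega>] in \<open>auto simp: F_def\<close>)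
    then show ?thesis
      unfolding ts_def by (simp add: o_def)
  qed
  ultimately show ?thesis
    by (rule borel_measurable_LIMSEQ_metric)
qed (use \<theta>_meas in simp)

section \<open>Natural filtrations\<close>

lemma space_natural_filtration [simp]: "space (natural_filtration M S Z s) = space M"
  unfolding natural_filtration_def by (simp add: space_measure_of_conv)

lemma sets_natural_filtration:
  "sets (natural_filtration M S Z s) =
    sigma_sets (space M) (\<Union>u\<in>{0..s}. (\<lambda>A. Z u -` A \<inter> space M) ` sets S)"
  unfolding natural_filtration_def by (rule sets_measure_of) auto

lemma measurable_natural_filtration:
  assumes "u \<in> {0..s}" "Z u \<in> space M \<rightarrow> space S"
  shows "Z u \<in> measurable (natural_filtration M S Z s) S"
proof (rule measurableI)
  fix A assume "A \<in> sets S"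
  then have "Z u -` A \<inter> space M \<in> (\<Union>u\<in>{0..s}. (\<lambda>A. Z u -` A \<inter> space M) ` sets S)"
    using assms(1) by blast
  then show "Z u -` A \<inter> space (natural_filtration M S Z s) \<in> sets (natural_filtration M S Z s)"
    unfolding sets_natural_filtration by auto
qed (use assms(2) in auto)

lemma sets_natural_filtration_subset:
  assumes "space F = space M" "\<And>u. u \<in> {0..s} \<Longrightarrow> Z u \<in> measurable F S"
  shows "sets (natural_filtration M S Z s) \<subseteq> sets F"
  unfolding sets_natural_filtration
proof (rule sets.sigma_sets_subset'[of _ F, unfolded assms(1)])
  show "(\<Union>u\<in>{0..s}. (\<lambda>A. Z u -` A \<inter> space M) ` sets S) \<subseteq> sets F"
    using measurable_sets[OF assms(2)] assms(1) by auto
qed (use sets.top[of F] assms(1) in simp)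

lemma subalgebra_natural_filtration:
  assumes "\<And>u. u \<in> {0..s} \<Longrightarrow> Z u \<in> measurable M S"
  shows "subalgebra M (natural_filtration M S Z s)"
  unfolding subalgebra_def using sets_natural_filtration_subset[of M M s Z S] assms by auto

lemma natural_filtration_mono:
  assumes "s \<le> s'"
  shows "subalgebra (natural_filtration M S Z s') (natural_filtration M S Z s)"
  unfolding subalgebra_def sets_natural_filtration using assms
  by (intro conjI sigma_sets_mono' UN_mono) auto

section \<open>The Markov property of the switched flow\<close>

lemma (in prob_space) sigma_finite_subalgebraI:
  assumes "subalgebra M F"
  shows "sigma_finite_subalgebra M F"
  by (rule finite_measure_subalgebra_is_sigma_finite) (unfold_locales, rule assms)

lemma integrable_mult_bounded:
  fixes X Y :: "'w \<Rightarrow> real"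
  assumes "integrable M X" "Y \<in> borel_measurable M" "\<And>\<omega>. \<omega> \<in> space M \<Longrightarrow> \<bar>Y \<omega>\<bar> \<le> C"
  shows "integrable M (\<lambda>\<omega>. X \<omega> * Y \<omega>)"
proof (rule Bochner_Integration.integrable_bound[OF integrable_mult_right[OF integrable_abs[OF assms(1)]]])
  show "(\<lambda>\<omega>. X \<omega> * Y \<omega>) \<in> borel_measurable M"
    using assms(1,2) by measurable
  show "AE \<omega> in M. norm (X \<omega> * Y \<omega>) \<le> norm (\<bar>C\<bar> * \<bar>X \<omega>\<bar>)"
  proof (rule AE_I2)
    fix \<omega> assume "\<omega> \<in> space M"
    then have "\<bar>Y \<omega>\<bar> \<le> \<bar>C\<bar>" using assms(3) by fastforce
    then show "norm (X \<omega> * Y \<omega>) \<le> norm (\<bar>C\<bar> * \<bar>X \<omega>\<bar>)"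
      by (simp add: abs_mult mult.commute[of "\<bar>C\<bar>"] mult_left_mono)
  qed
qed

definition fun_of_sorted_list :: "real set \<Rightarrow> 'b list \<Rightarrow> real \<Rightarrow> 'b" where
  "fun_of_sorted_list T vs = (\<lambda>\<tau>. if \<tau> \<in> T then the (map_of (zip (sorted_list_of_set T) vs) \<tau>) else undefined)"

lemma fun_of_sorted_list_map:
  "finite T \<Longrightarrow> fun_of_sorted_list T (map f (sorted_list_of_set T)) = restrict f T"
  by (auto simp: fun_of_sorted_list_def restrict_def fun_eq_iff map_of_zip_map)

text \<open>For \<open>s \<le> t\<^sub>1 \<le> \<dots> \<le> t\<^sub>n\<close>, \<open>path_expectation N p s [t\<^sub>1, \<dots>, t\<^sub>n] h l\<close> is
  \<open>E[h [i t\<^sub>1, \<dots>, i t\<^sub>n] | i s = l]\<close> for a chain on \<open>{..<N}\<close> with transition function \<open>p\<close>.\<close>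

fun path_expectation ::
  "nat \<Rightarrow> (real \<Rightarrow> real \<Rightarrow> nat \<Rightarrow> nat \<Rightarrow> real) \<Rightarrow> real \<Rightarrow> real list \<Rightarrow> (nat list \<Rightarrow> real) \<Rightarrow> nat \<Rightarrow> real"
where
  "path_expectation N p s [] h l = h []"
| "path_expectation N p s (t # ts) h l =
     (\<Sum>m<N. p s t l m * path_expectation N p t ts (\<lambda>vs. h (m # vs)) m)"

locale switched_flow = prob_space M for M :: "'w measure" +
  fixes N :: nat and p :: "real \<Rightarrow> real \<Rightarrow> nat \<Rightarrow> nat \<Rightarrow> real" and i :: "real \<Rightarrow> 'w \<Rightarrow> nat"
    and \<theta> :: "real \<Rightarrow> 'w \<Rightarrow> 'a::euclidean_space" and G :: "nat \<Rightarrow> 'a \<Rightarrow> 'a" and \<theta>\<^sub>0 :: 'a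
  assumes i_measurable: "\<And>t. 0 \<le> t \<Longrightarrow> i t \<in> measurable M (count_space UNIV)"
    and i_less: "\<And>\<omega> t. \<omega> \<in> space M \<Longrightarrow> 0 \<le> t \<Longrightarrow> i t \<omega> < N"
    and i_right_constant: "\<And>\<omega> t. \<omega> \<in> space M \<Longrightarrow> 0 \<le> t \<Longrightarrow> \<exists>e>0. \<forall>u\<in>{t..<t+e}. i u \<omega> = i t \<omega>"
    and i_transition: "\<And>s t l. 0 \<le> s \<Longrightarrow> s \<le> t \<Longrightarrow> l < N \<Longrightarrow>
       AE \<omega> in M. real_cond_exp M (natural_filtration M (count_space UNIV) i s)
                   (\<lambda>\<omega>. indicator {l} (i t \<omega>)) \<omega> = p s t (i s \<omega>) l"
    and G_continuous: "\<And>l. l < N \<Longrightarrow> continuous_on UNIV (G l)"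
    and G_loc_lipschitz: "\<And>l. l < N \<Longrightarrow> loc_lipschitz (G l)"
    and flow: "\<And>\<omega> t. \<omega> \<in> space M \<Longrightarrow> 0 \<le> t \<Longrightarrow>
       ((\<lambda>s. G (i s \<omega>) (\<theta> s \<omega>)) has_integral (\<theta>\<^sub>0 - \<theta> t \<omega>)) {0..t}"
begin

abbreviation "chain_past s \<equiv> natural_filtration M (count_space UNIV) i s"
abbreviation "state_space \<equiv> (borel \<Otimes>\<^sub>M count_space UNIV) :: ('a \<times> nat) measure"
abbreviation "state \<equiv> (\<lambda>t \<omega>. (\<theta> t \<omega>, i t \<omega>))"
abbreviation "past s \<equiv> natural_filtration M state_space state s"
abbreviation "present s \<equiv> vimage_algebra (space M) (state s) state_space"

text \<open>\<open>future s\<close> is \<open>\<sigma>(\<theta> s, i \<tau> : \<tau> \<ge> s)\<close>, generated by finite-dimensional cylinders.\<close>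

definition future_cylinders :: "real \<Rightarrow> 'w set set" where
  "future_cylinders s = {{\<omega>\<in>space M. \<theta> s \<omega> \<in> C \<and> restrict (\<lambda>\<tau>. i \<tau> \<omega>) T \<in> R} | C T R.
     C \<in> sets borel \<and> finite T \<and> T \<subseteq> {s..}}"

definition future :: "real \<Rightarrow> 'w measure" where
  "future s = sigma (space M) (future_cylinders s)"

lemma future_cylinderI:
  "C \<in> sets borel \<Longrightarrow> finite T \<Longrightarrow> T \<subseteq> {s..} \<Longrightarrow>
    {\<omega>\<in>space M. \<theta> s \<omega> \<in> C \<and> restrict (\<lambda>\<tau>. i \<tau> \<omega>) T \<in> R} \<in> future_cylinders s"
  unfolding future_cylinders_def by blast

lemma space_future [simp]: "space (future s) = space M"
  unfolding future_def by (simp add: space_measure_of_conv)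

lemma sets_future: "sets (future s) = sigma_sets (space M) (future_cylinders s)"
  unfolding future_def by (rule sets_measure_of) (auto simp: future_cylinders_def)

lemma subalgebra_chain_past: "0 \<le> s \<Longrightarrow> subalgebra M (chain_past s)"
  by (rule subalgebra_natural_filtration) (auto intro: i_measurable)

lemma i_chain_past: "0 \<le> u \<Longrightarrow> u \<le> s \<Longrightarrow> i u \<in> measurable (chain_past s) (count_space UNIV)"
  by (rule measurable_natural_filtration) auto

lemma flow_from:
  assumes "\<omega> \<in> space M" "0 \<le> s" "s \<le> r"
  shows "((\<lambda>\<rho>. G (i \<rho> \<omega>) (\<theta> \<rho> \<omega>)) has_integral (\<theta> s \<omega> - \<theta> r \<omega>)) {s..r}"
proof -
  let ?g = "\<lambda>\<rho>. G (i \<rho> \<omega>) (\<theta> \<rho> \<omega>)"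
  have "?g integrable_on {s..r}"
    by (rule integrable_subinterval_real[OF has_integral_integrable[OF flow[OF assms(1), of r]]])
      (use assms(2,3) in auto)
  then have "(?g has_integral (\<theta>\<^sub>0 - \<theta> s \<omega>) + integral {s..r} ?g) {0..r}"
    using flow[OF assms(1,2)] assms(2,3) by (intro has_integral_combine) auto
  then have "(\<theta>\<^sub>0 - \<theta> s \<omega>) + integral {s..r} ?g = \<theta>\<^sub>0 - \<theta> r \<omega>"
    using flow[OF assms(1), of r] assms(2,3) by (auto dest: has_integral_unique)
  then show ?thesis
    using \<open>?g integrable_on {s..r}\<close> by (simp add: has_integral_iff algebra_simps)
qed

lemma \<theta>_zero: "\<omega> \<in> space M \<Longrightarrow> \<theta> 0 \<omega> = \<theta>\<^sub>0"
  using has_integral_unique[OF flow[of \<omega> 0] has_integral_null_real[of 0 0]] by simp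

lemma \<theta>_measurable_from:
  assumes "0 \<le> s" "s \<le> t" "space F = space M" "\<theta> s \<in> borel_measurable F"
    and "\<And>\<tau>. \<tau> \<in> {s<..t} \<Longrightarrow> i \<tau> \<in> measurable F (count_space UNIV)"
  shows "\<theta> t \<in> borel_measurable F"
proof (rule switched_flow_measurable[where I="{..<N}" and G=G and M=F])
  show "i r \<omega> \<in> {..<N}" if "\<omega> \<in> space F" "s \<le> r" for \<omega> r
    using i_less[of \<omega> r] that assms(1,3) by simp
  show "\<exists>e>0. \<forall>u\<in>{r..<r + e}. i u \<omega> = i r \<omega>" if "\<omega> \<in> space F" "s \<le> r" for \<omega> r
    using i_right_constant[of \<omega> r] that assms(1,3) by simp
  show "((\<lambda>\<rho>. G (i \<rho> \<omega>) (\<theta> \<rho> \<omega>)) has_integral \<theta> s \<omega> - \<theta> r \<omega>) {s..r}"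
    if "\<omega> \<in> space F" "r \<in> {s..t}" for \<omega> r
    using flow_from[of \<omega> s r] that assms(1,3) by simp
qed (use assms G_continuous G_loc_lipschitz in auto)

lemma \<theta>_chain_past: "0 \<le> t \<Longrightarrow> \<theta> t \<in> borel_measurable (chain_past t)"
proof (rule \<theta>_measurable_from[of 0])
  show "\<theta> 0 \<in> borel_measurable (chain_past t)"
    by (subst measurable_cong[where g="\<lambda>_. \<theta>\<^sub>0"]) (auto simp: \<theta>_zero)
qed (auto intro: i_chain_past)

lemma \<theta>_measurable: "0 \<le> t \<Longrightarrow> \<theta> t \<in> borel_measurable M"
  by (rule measurable_from_subalg[OF subalgebra_chain_past \<theta>_chain_past])

lemma state_chain_past: "0 \<le> u \<Longrightarrow> u \<le> s \<Longrightarrow> state u \<in> measurable (chain_past s) state_space"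
  using measurable_from_subalg[OF natural_filtration_mono \<theta>_chain_past]
  by (intro measurable_Pair i_chain_past) auto

lemma state_measurable: "0 \<le> t \<Longrightarrow> state t \<in> measurable M state_space"
  by (intro measurable_Pair \<theta>_measurable i_measurable)

lemma subalgebra_chain_past_past: "0 \<le> s \<Longrightarrow> subalgebra (chain_past s) (past s)"
  unfolding subalgebra_def
  using sets_natural_filtration_subset[of "chain_past s" M s state state_space] state_chain_past
  by auto

lemma subalgebra_past: "0 \<le> s \<Longrightarrow> subalgebra M (past s)"
  by (rule subalgebra_natural_filtration) (auto intro: state_measurable)

lemma sets_present: "sets (present s) = {state s -` A \<inter> space M | A. A \<in> sets state_space}"
  by (rule sets_vimage_algebra2) (simp add: space_pair_measure)

lemma state_present: "state s \<in> measurable (present s) state_space"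
  by (rule measurable_vimage_algebra1) (simp add: space_pair_measure)

lemma subalgebra_of_state_measurable:
  assumes "space F = space M" "state s \<in> measurable F state_space"
  shows "subalgebra F (present s)"
  unfolding subalgebra_def sets_present using measurable_sets[OF assms(2)] assms(1) by auto

lemma subalgebra_past_present: "0 \<le> s \<Longrightarrow> subalgebra (past s) (present s)"
  by (rule subalgebra_of_state_measurable) (auto intro: measurable_natural_filtration simp: space_pair_measure)

lemma subalgebra_present: "0 \<le> s \<Longrightarrow> subalgebra M (present s)"
  by (rule subalgebra_of_state_measurable[OF refl state_measurable])

lemma future_cylinders_subset: "0 \<le> s \<Longrightarrow> future_cylinders s \<subseteq> sets M"
proof
  fix B assume "0 \<le> s" "B \<in> future_cylinders s"
  then obtain C T R where B: "B = {\<omega>\<in>space M. \<theta> s \<omega> \<in> C \<and> restrict (\<lambda>\<tau>. i \<tau> \<omega>) T \<in> R}"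
    and C: "C \<in> sets borel" and T: "finite T" "T \<subseteq> {s..}"
    unfolding future_cylinders_def by blast
  let ?path = "\<lambda>\<omega>. fun_of_sorted_list T (map (\<lambda>\<tau>. i \<tau> \<omega>) (sorted_list_of_set T))"
  have "(\<lambda>\<omega>. map (\<lambda>\<tau>. i \<tau> \<omega>) (sorted_list_of_set T)) \<in> measurable M (count_space UNIV)"
    using T \<open>0 \<le> s\<close> by (intro measurable_map_list i_measurable) auto
  then have "?path \<in> measurable M (count_space UNIV)"
    by (rule measurable_compose[OF _ measurable_count_space])
  then have "?path -` R \<inter> space M \<in> sets M"
    by (simp add: measurable_sets)
  moreover have "B = (\<theta> s -` C \<inter> space M) \<inter> (?path -` R \<inter> space M)"
    unfolding B using fun_of_sorted_list_map[OF T(1)] by auto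
  ultimately show "B \<in> sets M"
    using measurable_sets[OF \<theta>_measurable[OF \<open>0 \<le> s\<close>] C] by auto
qed

lemma subalgebra_future: "0 \<le> s \<Longrightarrow> subalgebra M (future s)"
  unfolding subalgebra_def sets_future using sets.sigma_sets_subset[OF future_cylinders_subset] by auto

lemma \<theta>_future: "\<theta> s \<in> borel_measurable (future s)"
proof (rule measurableI)
  fix C :: "'a set" assume "C \<in> sets borel"
  have "\<theta> s -` C \<inter> space (future s) = {\<omega>\<in>space M. \<theta> s \<omega> \<in> C \<and> restrict (\<lambda>\<tau>. i \<tau> \<omega>) {} \<in> UNIV}"
    by auto
  also have "\<dots> \<in> future_cylinders s"
    using \<open>C \<in> sets borel\<close> by (intro future_cylinderI) auto
  finally show "\<theta> s -` C \<inter> space (future s) \<in> sets (future s)"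
    unfolding sets_future by auto
qed simp

lemma i_future: "s \<le> \<tau> \<Longrightarrow> i \<tau> \<in> measurable (future s) (count_space UNIV)"
proof (rule measurableI)
  fix A :: "nat set" assume "s \<le> \<tau>"
  have "i \<tau> -` A \<inter> space (future s)
      = {\<omega>\<in>space M. \<theta> s \<omega> \<in> UNIV \<and> restrict (\<lambda>\<tau>. i \<tau> \<omega>) {\<tau>} \<in> {f. f \<tau> \<in> A}}"
    by auto
  also have "\<dots> \<in> future_cylinders s"
    using \<open>s \<le> \<tau>\<close> by (intro future_cylinderI) auto
  finally show "i \<tau> -` A \<inter> space (future s) \<in> sets (future s)"
    unfolding sets_future by auto
qed simp

lemma state_future: "0 \<le> s \<Longrightarrow> s \<le> t \<Longrightarrow> state t \<in> measurable (future s) state_space"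
  using \<theta>_measurable_from[OF _ _ _ \<theta>_future] i_future by (intro measurable_Pair) auto

lemma subalgebra_future_present: "0 \<le> s \<Longrightarrow> subalgebra (future s) (present s)"
  by (rule subalgebra_of_state_measurable[OF _ state_future]) auto

lemma borel_measurable_fun_i:
  assumes "0 \<le> u" shows "(\<lambda>\<omega>. \<phi> (i u \<omega>) :: real) \<in> borel_measurable M"
  using measurable_compose[OF i_measurable[OF assms] borel_measurable_count_space[of \<phi>]]
  by (simp add: o_def)

lemma abs_fun_i_le: "\<omega> \<in> space M \<Longrightarrow> 0 \<le> u \<Longrightarrow> \<bar>\<phi> (i u \<omega>) :: real\<bar> \<le> (\<Sum>l<N. \<bar>\<phi> l\<bar>)"
  using i_less[of \<omega> u] by (intro member_le_sum[where f="\<lambda>l. \<bar>\<phi> l\<bar>"]) auto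

lemma integrable_mult_fun_i:
  fixes X :: "'w \<Rightarrow> real"
  assumes "integrable M X" "0 \<le> u" shows "integrable M (\<lambda>\<omega>. X \<omega> * \<phi> (i u \<omega>))"
  by (rule integrable_mult_bounded[OF assms(1) borel_measurable_fun_i[OF assms(2)] abs_fun_i_le[OF _ assms(2)]])

lemma integral_split_value:
  fixes X :: "'w \<Rightarrow> real" and f :: "nat \<Rightarrow> 'w \<Rightarrow> real"
  assumes "0 \<le> u" and int: "\<And>m. m < N \<Longrightarrow> integrable M (\<lambda>\<omega>. X \<omega> * indicator {m} (i u \<omega>) * f m \<omega>)"
  shows "(\<integral>\<omega>. X \<omega> * f (i u \<omega>) \<omega> \<partial>M) = (\<Sum>m<N. \<integral>\<omega>. X \<omega> * indicator {m} (i u \<omega>) * f m \<omega> \<partial>M)"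
proof -
  have "(\<integral>\<omega>. X \<omega> * f (i u \<omega>) \<omega> \<partial>M) = (\<integral>\<omega>. (\<Sum>m<N. X \<omega> * indicator {m} (i u \<omega>) * f m \<omega>) \<partial>M)"
  proof (rule Bochner_Integration.integral_cong[OF refl])
    fix \<omega> assume "\<omega> \<in> space M"
    then have "i u \<omega> \<in> {..<N}" using i_less \<open>0 \<le> u\<close> by simp
    moreover have "(\<Sum>m<N. X \<omega> * indicator {m} (i u \<omega>) * f m \<omega>)
        = (\<Sum>m<N. if m = i u \<omega> then X \<omega> * f m \<omega> else 0)"
      by (rule sum.cong) (auto simp: indicator_def)
    ultimately show "X \<omega> * f (i u \<omega>) \<omega> = (\<Sum>m<N. X \<omega> * indicator {m} (i u \<omega>) * f m \<omega>)"
      by (simp add: sum.delta)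
  qed
  also have "\<dots> = (\<Sum>m<N. \<integral>\<omega>. X \<omega> * indicator {m} (i u \<omega>) * f m \<omega> \<partial>M)"
    using int by (intro Bochner_Integration.integral_sum) auto
  finally show ?thesis .
qed

lemma integral_mult_indicator_transition:
  assumes "0 \<le> s" "s \<le> t" "m < N" "integrable M X" "X \<in> borel_measurable (chain_past s)"
  shows "(\<integral>\<omega>. X \<omega> * indicator {m} (i t \<omega>) \<partial>M) = (\<integral>\<omega>. X \<omega> * p s t (i s \<omega>) m \<partial>M)"
proof -
  interpret chain_past: sigma_finite_subalgebra M "chain_past s"
    by (rule sigma_finite_subalgebraI[OF subalgebra_chain_past[OF assms(1)]])
  have X_M: "X \<in> borel_measurable M"
    by (rule measurable_from_subalg[OF subalgebra_chain_past[OF assms(1)] assms(5)])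
  have "(\<integral>\<omega>. X \<omega> * indicator {m} (i t \<omega>) \<partial>M)
      = (\<integral>\<omega>. X \<omega> * real_cond_exp M (chain_past s) (\<lambda>\<omega>. indicator {m} (i t \<omega>)) \<omega> \<partial>M)"
    using assms(1,2,5) integrable_mult_fun_i[OF assms(4), of t "indicator {m}"]
      borel_measurable_fun_i[of t "indicator {m}"]
    by (intro chain_past.real_cond_exp_intg(2)[symmetric]) auto
  also have "\<dots> = (\<integral>\<omega>. X \<omega> * p s t (i s \<omega>) m \<partial>M)"
  proof (rule integral_cong_AE)
    show "AE \<omega> in M. X \<omega> * real_cond_exp M (chain_past s) (\<lambda>\<omega>. indicator {m} (i t \<omega>)) \<omega>
        = X \<omega> * p s t (i s \<omega>) m"
      using i_transition[OF assms(1-3)] by eventually_elim simp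
  qed (use X_M borel_measurable_fun_i[OF assms(1)] in measurable)
  finally show ?thesis .
qed

lemma integral_mult_fun_transition:
  fixes X :: "'w \<Rightarrow> real"
  assumes "0 \<le> s" "s \<le> t" "integrable M X" "X \<in> borel_measurable (chain_past s)"
  shows "(\<integral>\<omega>. X \<omega> * \<phi> (i t \<omega>) \<partial>M) = (\<integral>\<omega>. X \<omega> * (\<Sum>m<N. p s t (i s \<omega>) m * \<phi> m) \<partial>M)"
proof -
  have int: "integrable M (\<lambda>\<omega>. X \<omega> * \<psi> (i u \<omega>))" if "0 \<le> u" for \<psi> u
    using integrable_mult_fun_i[OF assms(3) that] .
  have "(\<integral>\<omega>. X \<omega> * \<phi> (i t \<omega>) \<partial>M) = (\<Sum>m<N. \<integral>\<omega>. X \<omega> * indicator {m} (i t \<omega>) * \<phi> m \<partial>M)"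
    using assms(1,2) int[of t "indicator {_}"] by (intro integral_split_value) auto
  also have "\<dots> = (\<Sum>m<N. (\<integral>\<omega>. X \<omega> * indicator {m} (i t \<omega>) \<partial>M) * \<phi> m)"
    by simp
  also have "\<dots> = (\<Sum>m<N. \<phi> m * \<integral>\<omega>. X \<omega> * p s t (i s \<omega>) m \<partial>M)"
    using integral_mult_indicator_transition[OF assms(1,2) _ assms(3,4)] by (simp add: ac_simps)
  also have "\<dots> = (\<Sum>m<N. \<integral>\<omega>. \<phi> m * (X \<omega> * p s t (i s \<omega>) m) \<partial>M)"
    by simp
  also have "\<dots> = (\<integral>\<omega>. (\<Sum>m<N. \<phi> m * (X \<omega> * p s t (i s \<omega>) m)) \<partial>M)"
    using int[OF assms(1), of "\<lambda>l. p s t l _"]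
    by (intro Bochner_Integration.integral_sum[symmetric]) auto
  also have "\<dots> = (\<integral>\<omega>. X \<omega> * (\<Sum>m<N. p s t (i s \<omega>) m * \<phi> m) \<partial>M)"
    by (simp add: sum_distrib_left ac_simps)
  finally show ?thesis .
qed

lemma integral_mult_path_functional:
  fixes X :: "'w \<Rightarrow> real"
  assumes "sorted ts" "\<forall>\<tau>\<in>set ts. s \<le> \<tau>" "0 \<le> s"
    and "integrable M X" "X \<in> borel_measurable (chain_past s)" "\<And>vs. \<bar>h vs\<bar> \<le> 1"
  shows "(\<integral>\<omega>. X \<omega> * h (map (\<lambda>\<tau>. i \<tau> \<omega>) ts) \<partial>M)
    = (\<integral>\<omega>. X \<omega> * path_expectation N p s ts h (i s \<omega>) \<partial>M)"
  using assms
proof (induction ts arbitrary: s X h)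
  case (Cons t ts)
  then have "s \<le> t" "sorted ts" "\<forall>\<tau>\<in>set ts. t \<le> \<tau>" "0 \<le> t" by auto
  define K where "K m = path_expectation N p t ts (\<lambda>vs. h (m # vs))" for m
  define rest where "rest \<omega> = map (\<lambda>\<tau>. i \<tau> \<omega>) ts" for \<omega>
  have X_t: "X \<in> borel_measurable (chain_past t)"
    using measurable_from_subalg[OF natural_filtration_mono[OF \<open>s \<le> t\<close>] Cons.prems(5)] .
  have Xm_t: "(\<lambda>\<omega>. X \<omega> * indicator {m} (i t \<omega>)) \<in> borel_measurable (chain_past t)" for m
  proof (rule borel_measurable_times[OF X_t])
    show "(\<lambda>\<omega>. indicator {m} (i t \<omega>)) \<in> borel_measurable (chain_past t)"
      using measurable_compose[OF i_chain_past[OF \<open>0 \<le> t\<close> order_refl]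
          borel_measurable_count_space[of "indicator {m}"]]
      by (simp add: o_def)
  qed
  have Xm_int: "integrable M (\<lambda>\<omega>. X \<omega> * indicator {m} (i t \<omega>))" for m
    by (rule integrable_mult_fun_i[OF Cons.prems(4) \<open>0 \<le> t\<close>])
  have rest_M: "(\<lambda>\<omega>. h (m # rest \<omega>)) \<in> borel_measurable M" for m
  proof -
    have "rest \<in> measurable M (count_space UNIV)"
      unfolding rest_def
      by (rule measurable_map_list, rule i_measurable) (use \<open>\<forall>\<tau>\<in>set ts. t \<le> \<tau>\<close> \<open>0 \<le> t\<close> in auto)
    from measurable_compose[OF this borel_measurable_count_space[of "\<lambda>vs. h (m # vs)"]]
    show ?thesis by (simp add: o_def)
  qed
  have "(\<integral>\<omega>. X \<omega> * h (map (\<lambda>\<tau>. i \<tau> \<omega>) (t # ts)) \<partial>M)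
      = (\<Sum>m<N. \<integral>\<omega>. X \<omega> * indicator {m} (i t \<omega>) * h (m # rest \<omega>) \<partial>M)"
    using integrable_mult_bounded[OF Xm_int rest_M] Cons.prems(6)
    by (subst integral_split_value[OF \<open>0 \<le> t\<close>, symmetric]) (auto simp: rest_def)
  also have "\<dots> = (\<Sum>m<N. \<integral>\<omega>. X \<omega> * indicator {m} (i t \<omega>) * K m (i t \<omega>) \<partial>M)"
  proof (rule sum.cong[OF refl])
    fix m
    show "(\<integral>\<omega>. X \<omega> * indicator {m} (i t \<omega>) * h (m # rest \<omega>) \<partial>M)
        = (\<integral>\<omega>. X \<omega> * indicator {m} (i t \<omega>) * K m (i t \<omega>) \<partial>M)"
      unfolding rest_def K_def
      by (rule Cons.IH[OF \<open>sorted ts\<close> \<open>\<forall>\<tau>\<in>set ts. t \<le> \<tau>\<close> \<open>0 \<le> t\<close> Xm_int Xm_t])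
        (rule Cons.prems(6))
  qed
  also have "\<dots> = (\<integral>\<omega>. X \<omega> * K (i t \<omega>) (i t \<omega>) \<partial>M)"
    using integrable_mult_fun_i[OF Xm_int \<open>0 \<le> t\<close>]
    by (intro integral_split_value[OF \<open>0 \<le> t\<close>, symmetric]) auto
  also have "\<dots> = (\<integral>\<omega>. X \<omega> * (\<Sum>m<N. p s t (i s \<omega>) m * K m m) \<partial>M)"
    by (rule integral_mult_fun_transition[OF Cons.prems(3) \<open>s \<le> t\<close> Cons.prems(4,5)])
  finally show ?case
    by (simp add: K_def)
qed simp

lemma integrable_indicator_event: "A \<in> sets M \<Longrightarrow> integrable M (indicator A :: 'w \<Rightarrow> real)"
  by (rule integrable_const_bound[where B=1]) (auto simp: indicator_def)

lemma future_cylinder_integral_eq_present: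
  assumes "0 \<le> s" and B: "B \<in> future_cylinders s"
  obtains f :: "'w \<Rightarrow> real" and c :: real
  where "f \<in> borel_measurable (present s)" "\<And>\<omega>. \<omega> \<in> space M \<Longrightarrow> \<bar>f \<omega>\<bar> \<le> c"
    and "\<And>Y. integrable M Y \<Longrightarrow> Y \<in> borel_measurable (chain_past s) \<Longrightarrow>
      (\<integral>\<omega>. Y \<omega> * indicator B \<omega> \<partial>M) = (\<integral>\<omega>. Y \<omega> * f \<omega> \<partial>M)"
proof -
  obtain C T R where B_eq: "B = {\<omega>\<in>space M. \<theta> s \<omega> \<in> C \<and> restrict (\<lambda>\<tau>. i \<tau> \<omega>) T \<in> R}"
    and C: "C \<in> sets borel" and T: "finite T" "T \<subseteq> {s..}"
    using B unfolding future_cylinders_def by blast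
  define ts where "ts = sorted_list_of_set T"
  define h where "h vs = (indicator R (fun_of_sorted_list T vs) :: real)" for vs
  define K where "K = path_expectation N p s ts h"
  define f where "f \<omega> = indicator C (\<theta> s \<omega>) * K (i s \<omega>)" for \<omega>
  have C_past: "(\<lambda>\<omega>. indicator C (\<theta> s \<omega>) :: real) \<in> borel_measurable (chain_past s)"
    using measurable_compose[OF \<theta>_chain_past[OF \<open>0 \<le> s\<close>] borel_measurable_indicator[OF C]]
    by (simp add: o_def)
  have C_M: "(\<lambda>\<omega>. indicator C (\<theta> s \<omega>) :: real) \<in> borel_measurable M"
    by (rule measurable_from_subalg[OF subalgebra_chain_past[OF \<open>0 \<le> s\<close>] C_past])
  have "(\<lambda>z. indicator C (fst z) * K (snd z) :: real) \<in> borel_measurable state_space"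
    using C by measurable
  from measurable_compose[OF state_present this]
  have f_present: "f \<in> borel_measurable (present s)"
    unfolding f_def by simp
  have f_bound: "\<bar>f \<omega>\<bar> \<le> (\<Sum>l<N. \<bar>K l\<bar>)" if "\<omega> \<in> space M" for \<omega>
    using abs_fun_i_le[OF that \<open>0 \<le> s\<close>, of K] unfolding f_def by (simp add: abs_mult indicator_def)
  have B_integral: "(\<integral>\<omega>. Y \<omega> * indicator B \<omega> \<partial>M) = (\<integral>\<omega>. Y \<omega> * f \<omega> \<partial>M)"
    if Y: "integrable M Y" "Y \<in> borel_measurable (chain_past s)" for Y
  proof -
    have "indicator B \<omega> = indicator C (\<theta> s \<omega>) * h (map (\<lambda>\<tau>. i \<tau> \<omega>) ts)" if "\<omega> \<in> space M" for \<omega>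
      using that fun_of_sorted_list_map[OF T(1), of "\<lambda>\<tau>. i \<tau> \<omega>"]
      unfolding B_eq h_def ts_def by (simp add: indicator_def)
    then have "(\<integral>\<omega>. Y \<omega> * indicator B \<omega> \<partial>M)
        = (\<integral>\<omega>. (Y \<omega> * indicator C (\<theta> s \<omega>)) * h (map (\<lambda>\<tau>. i \<tau> \<omega>) ts) \<partial>M)"
      by (intro Bochner_Integration.integral_cong) (simp_all add: ac_simps)
    also have "\<dots> = (\<integral>\<omega>. Y \<omega> * f \<omega> \<partial>M)"
      using T Y C_past \<open>0 \<le> s\<close> integrable_mult_bounded[OF Y(1) C_M, of 1]
      unfolding f_def K_def ts_def h_def
      by (subst integral_mult_path_functional) (auto simp: ac_simps indicator_def)
    finally show ?thesis .
  qed
  show ?thesis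
    by (rule that[OF f_present f_bound B_integral])
qed

lemma measure_inter_future_cylinder:
  assumes "0 \<le> s" and A: "A \<in> sets (chain_past s)" and B: "B \<in> future_cylinders s"
  shows "measure M (A \<inter> B) = (LINT \<omega>:B|M. real_cond_exp M (present s) (indicator A) \<omega>)"
proof -
  interpret present: sigma_finite_subalgebra M "present s"
    by (rule sigma_finite_subalgebraI[OF subalgebra_present[OF \<open>0 \<le> s\<close>]])
  obtain f :: "'w \<Rightarrow> real" and c :: real where f_present: "f \<in> borel_measurable (present s)"
    and f_bound: "\<And>\<omega>. \<omega> \<in> space M \<Longrightarrow> \<bar>f \<omega>\<bar> \<le> c"
    and B_integral: "\<And>Y. integrable M Y \<Longrightarrow> Y \<in> borel_measurable (chain_past s) \<Longrightarrow>
      (\<integral>\<omega>. Y \<omega> * indicator B \<omega> \<partial>M) = (\<integral>\<omega>. Y \<omega> * f \<omega> \<partial>M)"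
    using future_cylinder_integral_eq_present[OF \<open>0 \<le> s\<close> B] by blast
  define w where "w = real_cond_exp M (present s) (indicator A)"
  have A_M: "A \<in> sets M"
    using A subalgebra_chain_past[OF \<open>0 \<le> s\<close>] unfolding subalgebra_def by auto
  have w_int: "integrable M w"
    unfolding w_def by (rule present.real_cond_exp_int(1)[OF integrable_indicator_event[OF A_M]])
  have "w \<in> borel_measurable (present s)"
    unfolding w_def by simp
  then have "w \<in> borel_measurable (past s)"
    by (rule measurable_from_subalg[OF subalgebra_past_present[OF \<open>0 \<le> s\<close>]])
  then have w_past: "w \<in> borel_measurable (chain_past s)"
    by (rule measurable_from_subalg[OF subalgebra_chain_past_past[OF \<open>0 \<le> s\<close>]])
  have "measure M (A \<inter> B) = (\<integral>\<omega>. indicator A \<omega> * indicator B \<omega> \<partial>M)"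
    using A_M sets.sets_into_space[OF A_M]
    by (simp add: indicator_inter_arith[symmetric] Int_absorb2 Int_assoc[symmetric] le_infI1)
  also have "\<dots> = (\<integral>\<omega>. indicator A \<omega> * f \<omega> \<partial>M)"
    using A by (intro B_integral integrable_indicator_event[OF A_M]) simp
  also have "\<dots> = (\<integral>\<omega>. f \<omega> * w \<omega> \<partial>M)"
  proof -
    have "f \<in> borel_measurable M"
      by (rule measurable_from_subalg[OF subalgebra_present[OF \<open>0 \<le> s\<close>] f_present])
    from integrable_mult_bounded[OF integrable_indicator_event[OF A_M] this f_bound]
    have "integrable M (\<lambda>\<omega>. f \<omega> * indicator A \<omega>)"
      by (simp add: ac_simps)
    then have "(\<integral>\<omega>. f \<omega> * w \<omega> \<partial>M) = (\<integral>\<omega>. f \<omega> * indicator A \<omega> \<partial>M)"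
      unfolding w_def by (rule present.real_cond_exp_intg(2)[OF _ f_present]) (use A_M in simp)
    then show ?thesis
      by (simp add: ac_simps)
  qed
  also have "\<dots> = (\<integral>\<omega>. w \<omega> * indicator B \<omega> \<partial>M)"
    using B_integral[OF w_int w_past] by (simp add: ac_simps)
  finally show ?thesis
    unfolding w_def set_lebesgue_integral_def by (simp add: ac_simps)
qed

lemma Int_stable_future_cylinders: "Int_stable (future_cylinders s)"
proof (rule Int_stableI)
  fix a b assume "a \<in> future_cylinders s" "b \<in> future_cylinders s"
  then obtain C1 T1 R1 C2 T2 R2 where
    a: "a = {\<omega>\<in>space M. \<theta> s \<omega> \<in> C1 \<and> restrict (\<lambda>\<tau>. i \<tau> \<omega>) T1 \<in> R1}"
    and b: "b = {\<omega>\<in>space M. \<theta> s \<omega> \<in> C2 \<and> restrict (\<lambda>\<tau>. i \<tau> \<omega>) T2 \<in> R2}"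
    and C: "C1 \<in> sets borel" "C2 \<in> sets borel"
    and T: "finite T1" "T1 \<subseteq> {s..}" "finite T2" "T2 \<subseteq> {s..}"
    unfolding future_cylinders_def by blast
  have "a \<inter> b = {\<omega>\<in>space M. \<theta> s \<omega> \<in> C1 \<inter> C2 \<and> restrict (\<lambda>\<tau>. i \<tau> \<omega>) (T1 \<union> T2)
      \<in> {f. restrict f T1 \<in> R1 \<and> restrict f T2 \<in> R2}}"
    unfolding a b by (auto simp: restrict_restrict Int_absorb1)
  also have "\<dots> \<in> future_cylinders s"
    using C T by (intro future_cylinderI) auto
  finally show "a \<inter> b \<in> future_cylinders s" .
qed

lemma measure_inter_future:
  assumes "0 \<le> s" and A: "A \<in> sets (chain_past s)" and B: "B \<in> sets (future s)"
  shows "measure M (A \<inter> B) = (LINT \<omega>:B|M. real_cond_exp M (present s) (indicator A) \<omega>)"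
proof -
  interpret present: sigma_finite_subalgebra M "present s"
    by (rule sigma_finite_subalgebraI[OF subalgebra_present[OF \<open>0 \<le> s\<close>]])
  define w where "w = real_cond_exp M (present s) (indicator A)"
  have A_M: "A \<in> sets M"
    using A subalgebra_chain_past[OF \<open>0 \<le> s\<close>] unfolding subalgebra_def by auto
  have w_int: "integrable M w"
    unfolding w_def by (rule present.real_cond_exp_int(1)[OF integrable_indicator_event[OF A_M]])
  have w_total: "(\<integral>\<omega>. w \<omega> \<partial>M) = measure M A"
    unfolding w_def present.real_cond_exp_int(2)[OF integrable_indicator_event[OF A_M]]
    using sets.sets_into_space[OF A_M] by (simp add: Int_absorb2)
  have future_M: "sigma_sets (space M) (future_cylinders s) \<subseteq> sets M"
    using subalgebra_future[OF \<open>0 \<le> s\<close>] unfolding subalgebra_def sets_future by simp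
  have "future_cylinders s \<subseteq> Pow (space M)"
    unfolding future_cylinders_def by auto
  from Int_stable_future_cylinders this B[unfolded sets_future] show ?thesis
    unfolding w_def[symmetric]
  proof (induction rule: sigma_sets_induct_disjoint)
    case (basic B)
    then show ?case
      unfolding w_def by (rule measure_inter_future_cylinder[OF \<open>0 \<le> s\<close> A])
  next
    case (compl B)
    then have B_M: "B \<in> sets M" using future_M by auto
    have "measure M (A \<inter> (space M - B)) = measure M A - measure M (A \<inter> B)"
      using A_M B_M sets.sets_into_space[OF A_M]
      by (subst finite_measure_Diff[symmetric]) (auto intro: arg_cong[where f="measure M"])
    also have "\<dots> = (\<integral>\<omega>. w \<omega> - indicator B \<omega> * w \<omega> \<partial>M)"
      using compl.IH w_total integrable_mult_bounded[OF w_int borel_measurable_indicator[OF B_M], of 1]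
      unfolding set_lebesgue_integral_def by (simp add: ac_simps w_int)
    also have "\<dots> = (LINT \<omega>:(space M - B)|M. w \<omega>)"
      unfolding set_lebesgue_integral_def
      by (rule Bochner_Integration.integral_cong[OF refl]) (auto simp: indicator_def)
    finally show ?case .
  next
    case (union F)
    then have F_M: "\<And>k. F k \<in> sets M" using future_M by auto
    have "set_integrable M (\<Union>k. F k) w"
      unfolding set_integrable_def using F_M by (intro integrable_mult_indicator[OF _ w_int]) auto
    then have "(LINT \<omega>:(\<Union>k. F k)|M. w \<omega>) = (\<Sum>k. LINT \<omega>:(F k)|M. w \<omega>)"
      using union.hyps(1)
      by (intro lebesgue_integral_countable_add[OF F_M]) (auto simp: disjoint_family_on_def)
    also have "\<dots> = (\<Sum>k. measure M (A \<inter> F k))"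
      using union.IH by simp
    also have "\<dots> = measure M (\<Union>k. A \<inter> F k)"
      using A_M F_M union.hyps(1)
      by (intro sums_unique[symmetric] finite_measure_UNION) (auto simp: disjoint_family_on_def)
    finally show ?case by simp
  qed (auto simp: set_lebesgue_integral_def)
qed

lemma cond_exp_future_eq_present:
  assumes "0 \<le> s" and A: "A \<in> sets (chain_past s)"
  shows "AE \<omega> in M. real_cond_exp M (future s) (indicator A) \<omega>
    = real_cond_exp M (present s) (indicator A) \<omega>"
proof -
  interpret future: sigma_finite_subalgebra M "future s"
    by (rule sigma_finite_subalgebraI[OF subalgebra_future[OF \<open>0 \<le> s\<close>]])
  interpret present: sigma_finite_subalgebra M "present s"
    by (rule sigma_finite_subalgebraI[OF subalgebra_present[OF \<open>0 \<le> s\<close>]])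
  have A_M: "A \<in> sets M"
    using A subalgebra_chain_past[OF \<open>0 \<le> s\<close>] unfolding subalgebra_def by auto
  show ?thesis
  proof (rule future.real_cond_exp_charact)
    fix B assume B: "B \<in> sets (future s)"
    then have "B \<in> sets M"
      using subalgebra_future[OF \<open>0 \<le> s\<close>] unfolding subalgebra_def by auto
    have "(LINT \<omega>:B|M. indicator A \<omega>) = (\<integral>\<omega>. (indicator (A \<inter> B) \<omega> :: real) \<partial>M)"
      unfolding set_lebesgue_integral_def
      by (rule Bochner_Integration.integral_cong[OF refl]) (auto simp: indicator_def)
    also have "\<dots> = measure M (A \<inter> B)"
      using A_M \<open>B \<in> sets M\<close> by simp
    also have "\<dots> = (LINT \<omega>:B|M. real_cond_exp M (present s) (indicator A) \<omega>)"
      by (rule measure_inter_future[OF \<open>0 \<le> s\<close> A B])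
    finally show "(LINT \<omega>:B|M. indicator A \<omega>) = (LINT \<omega>:B|M. real_cond_exp M (present s) (indicator A) \<omega>)" .
  next
    show "real_cond_exp M (present s) (indicator A) \<in> borel_measurable (future s)"
      by (rule measurable_from_subalg[OF subalgebra_future_present[OF \<open>0 \<le> s\<close>]]) simp
  qed (rule integrable_indicator_event[OF A_M],
      rule present.real_cond_exp_int(1)[OF integrable_indicator_event[OF A_M]])
qed

lemma set_integral_cond_exp_present:
  assumes "0 \<le> s" and A: "A \<in> sets (chain_past s)"
    and V: "V \<in> borel_measurable (future s)" "\<And>\<omega>. \<bar>V \<omega>\<bar> \<le> B"
  shows "(LINT \<omega>:A|M. V \<omega>) = (LINT \<omega>:A|M. real_cond_exp M (present s) V \<omega>)"
proof -
  interpret future: sigma_finite_subalgebra M "future s"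
    by (rule sigma_finite_subalgebraI[OF subalgebra_future[OF \<open>0 \<le> s\<close>]])
  interpret present: sigma_finite_subalgebra M "present s"
    by (rule sigma_finite_subalgebraI[OF subalgebra_present[OF \<open>0 \<le> s\<close>]])
  define w where "w = real_cond_exp M (present s) (indicator A)"
  define EV where "EV = real_cond_exp M (present s) V"
  have A_M: "A \<in> sets M"
    using A subalgebra_chain_past[OF \<open>0 \<le> s\<close>] unfolding subalgebra_def by auto
  have V_M: "V \<in> borel_measurable M"
    by (rule measurable_from_subalg[OF subalgebra_future[OF \<open>0 \<le> s\<close>] V(1)])
  have V_int: "integrable M V"
    using V(2) V_M by (intro integrable_const_bound[where B=B]) auto
  have w_int: "integrable M w"
    unfolding w_def by (rule present.real_cond_exp_int(1)[OF integrable_indicator_event[OF A_M]])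
  have w_present: "w \<in> borel_measurable (present s)"
    unfolding w_def by simp
  have "(LINT \<omega>:A|M. V \<omega>) = (\<integral>\<omega>. V \<omega> * indicator A \<omega> \<partial>M)"
    unfolding set_lebesgue_integral_def by (simp add: ac_simps)
  also have "\<dots> = (\<integral>\<omega>. V \<omega> * real_cond_exp M (future s) (indicator A) \<omega> \<partial>M)"
    using integrable_mult_bounded[OF integrable_indicator_event[OF A_M] V_M V(2)] A_M
    by (intro future.real_cond_exp_intg(2)[symmetric, OF _ V(1)]) (auto simp: ac_simps)
  also have "\<dots> = (\<integral>\<omega>. w \<omega> * V \<omega> \<partial>M)"
    unfolding w_def using cond_exp_future_eq_present[OF \<open>0 \<le> s\<close> A] V_M
    by (intro integral_cong_AE) (auto elim: eventually_mono)
  also have "\<dots> = (\<integral>\<omega>. w \<omega> * EV \<omega> \<partial>M)"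
    unfolding EV_def using integrable_mult_bounded[OF w_int V_M V(2)] V_M
    by (intro present.real_cond_exp_intg(2)[symmetric, OF _ w_present]) auto
  also have "\<dots> = (\<integral>\<omega>. EV \<omega> * w \<omega> \<partial>M)"
    by (simp add: ac_simps)
  also have "\<dots> = (\<integral>\<omega>. EV \<omega> * indicator A \<omega> \<partial>M)"
    unfolding w_def EV_def
    using integrable_mult_bounded[OF present.real_cond_exp_int(1)[OF V_int], of "indicator A" 1] A_M
    by (intro present.real_cond_exp_intg(2)) auto
  finally show ?thesis
    unfolding EV_def set_lebesgue_integral_def by (simp add: ac_simps)
qed

lemma cond_exp_past_eq_present:
  assumes "0 \<le> s" "s \<le> t" "f \<in> borel_measurable state_space" "bounded (f ` space state_space)"
  shows "AE \<omega> in M. real_cond_exp M (past s) (\<lambda>\<omega>. f (state t \<omega>)) \<omega>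
    = real_cond_exp M (present s) (\<lambda>\<omega>. f (state t \<omega>)) \<omega>"
proof -
  interpret past: sigma_finite_subalgebra M "past s"
    by (rule sigma_finite_subalgebraI[OF subalgebra_past[OF \<open>0 \<le> s\<close>]])
  interpret present: sigma_finite_subalgebra M "present s"
    by (rule sigma_finite_subalgebraI[OF subalgebra_present[OF \<open>0 \<le> s\<close>]])
  obtain B where B: "\<And>z. z \<in> space state_space \<Longrightarrow> \<bar>f z\<bar> \<le> B"
    using assms(4) unfolding bounded_iff by auto
  have V: "(\<lambda>\<omega>. f (state t \<omega>)) \<in> borel_measurable (future s)" "\<bar>f (state t \<omega>)\<bar> \<le> B" for \<omega>
    using measurable_compose[OF state_future[OF assms(1,2)] assms(3)] B[of "state t \<omega>"]
    by (auto simp: space_pair_measure)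
  have V_int: "integrable M (\<lambda>\<omega>. f (state t \<omega>))"
    using measurable_from_subalg[OF subalgebra_future[OF \<open>0 \<le> s\<close>] V(1)] V(2)
    by (intro integrable_const_bound[where B=B]) auto
  show ?thesis
  proof (rule past.real_cond_exp_charact)
    fix A assume "A \<in> sets (past s)"
    then have "A \<in> sets (chain_past s)"
      using subalgebra_chain_past_past[OF \<open>0 \<le> s\<close>] unfolding subalgebra_def by auto
    then show "(LINT \<omega>:A|M. f (state t \<omega>)) = (LINT \<omega>:A|M. real_cond_exp M (present s) (\<lambda>\<omega>. f (state t \<omega>)) \<omega>)"
      by (rule set_integral_cond_exp_present[OF \<open>0 \<le> s\<close> _ V])
  next
    show "real_cond_exp M (present s) (\<lambda>\<omega>. f (state t \<omega>)) \<in> borel_measurable (past s)"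
      by (rule measurable_from_subalg[OF subalgebra_past_present[OF \<open>0 \<le> s\<close>]]) simp
  qed (use V_int present.real_cond_exp_int(1) in auto)
qed

lemma markov_process_state: "markov_process M state_space state"
  unfolding markov_process_def using state_measurable cond_exp_past_eq_present by auto

end

lemma markov_process_of_ctmc:
  fixes G :: "nat \<Rightarrow> 'a::euclidean_space \<Rightarrow> 'a" and \<theta> :: "real \<Rightarrow> 'w \<Rightarrow> 'a"
  assumes "prob_space M" and chain: "ctmc M N q i"
    and "\<And>l. l < N \<Longrightarrow> continuous_on UNIV (G l)" "\<And>l. l < N \<Longrightarrow> loc_lipschitz (G l)"
    and "\<And>\<omega> t. \<omega> \<in> space M \<Longrightarrow> 0 \<le> t \<Longrightarrow>
      ((\<lambda>s. G (i s \<omega>) (\<theta> s \<omega>)) has_integral (\<theta>\<^sub>0 - \<theta> t \<omega>)) {0..t}"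
  shows "markov_process M (borel \<Otimes>\<^sub>M count_space UNIV) (\<lambda>t \<omega>. (\<theta> t \<omega>, i t \<omega>))"
proof -
  have "\<And>t. 0 \<le> t \<Longrightarrow> i t \<in> measurable M (count_space UNIV)"
    and "\<And>\<omega> t. \<omega> \<in> space M \<Longrightarrow> 0 \<le> t \<Longrightarrow> i t \<omega> < N"
    and "\<And>\<omega> t. \<omega> \<in> space M \<Longrightarrow> 0 \<le> t \<Longrightarrow> \<exists>e>0. \<forall>u\<in>{t..<t+e}. i u \<omega> = i t \<omega>"
    using chain unfolding ctmc_def cadlag_discrete_def by blast+
  moreover obtain p where "\<And>s t l. 0 \<le> s \<Longrightarrow> s \<le> t \<Longrightarrow> l < N \<Longrightarrow>
      AE \<omega> in M. real_cond_exp M (natural_filtration M (count_space UNIV) i s)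
        (\<lambda>\<omega>. indicator {l} (i t \<omega>)) \<omega> = p s t (i s \<omega>) l"
    using chain unfolding ctmc_def by blast
  ultimately interpret switched_flow M N p i \<theta> G \<theta>\<^sub>0
    by (intro switched_flow.intro[OF assms(1)] switched_flow_axioms.intro) (use assms(3-5) in auto)
  show ?thesis
    by (rule markov_process_state)
qed

theorem proposition3:
  fixes N :: nat
    and \<Phi> :: "nat \<Rightarrow> real ^ 'k \<Rightarrow> real"
    and G :: "nat \<Rightarrow> real ^ 'k \<Rightarrow> real ^ 'k"
    and M :: "'w measure" and M' :: "'v measure"
    and lam :: real and \<mu> \<mu>' :: "real \<Rightarrow> real"
    and \<theta>\<^sub>0 \<xi>\<^sub>0 :: "real ^ 'k"
    and i :: "real \<Rightarrow> 'w \<Rightarrow> nat" and \<theta> :: "real \<Rightarrow> 'w \<Rightarrow> real ^ 'k"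
    and j :: "real \<Rightarrow> 'v \<Rightarrow> nat" and \<xi> :: "real \<Rightarrow> 'v \<Rightarrow> real ^ 'k"
  assumes N2: "N \<ge> 2"
    and grad: "\<And>n x. n < N \<Longrightarrow> (\<Phi> n has_derivative (\<lambda>h. G n x \<bullet> h)) (at x)"
    and grad_cont: "\<And>n. n < N \<Longrightarrow> continuous_on UNIV (G n)"
    and grad_lip: "\<And>n. n < N \<Longrightarrow> loc_lipschitz (G n)"
    and M: "prob_space M"
    and lam: "lam > 0"
    and i_chain: "ctmc M N (\<lambda>_. uniform_rates N lam) i"
    and \<theta>_ode: "\<And>\<omega> t. \<omega> \<in> space M \<Longrightarrow> t \<ge> 0 \<Longrightarrow>
         ((\<lambda>s. G (i s \<omega>) (\<theta> s \<omega>)) has_integral (\<theta>\<^sub>0 - \<theta> t \<omega>)) {0..t}"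
    and M': "prob_space M'"
    and mu_pos: "\<And>t. t \<ge> 0 \<Longrightarrow> \<mu> t > 0"
    and mu_mono: "mono_on {0..} \<mu>"
    and mu_deriv: "\<And>t. t \<ge> 0 \<Longrightarrow> (\<mu> has_real_derivative \<mu>' t) (at t within {0..})"
    and mu'_cont: "continuous_on {0..} \<mu>'"
    and mu_lim: "filterlim \<mu> at_top at_top"
    and mu_bound: "\<And>tb. tb \<ge> 0 \<Longrightarrow> \<exists>C. \<forall>t\<in>{0..tb}. \<bar>\<mu>' t\<bar> \<le> C * \<mu> t"
    and j_chain: "ctmc M' N (\<lambda>t. uniform_rates N (\<mu> t)) j"
    and \<xi>_ode: "\<And>\<omega> t. \<omega> \<in> space M' \<Longrightarrow> t \<ge> 0 \<Longrightarrow>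
         ((\<lambda>s. G (j s \<omega>) (\<xi> s \<omega>)) has_integral (\<xi>\<^sub>0 - \<xi> t \<omega>)) {0..t}"
  shows "markov_process M (borel \<Otimes>\<^sub>M count_space UNIV) (\<lambda>t \<omega>. (\<theta> t \<omega>, i t \<omega>))
       \<and> markov_process M' (borel \<Otimes>\<^sub>M count_space UNIV) (\<lambda>t \<omega>. (\<xi> t \<omega>, j t \<omega>))"
  using markov_process_of_ctmc[OF M i_chain grad_cont grad_lip \<theta>_ode]
    markov_process_of_ctmc[OF M' j_chain grad_cont grad_lip \<xi>_ode]
  by blast

end
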